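(* Let $M_G$ be a connected mixed graph. Then $\operatorname{rank}N(M_G)=3$ if and only if $T_{M_G}$ is either a mixed triangle, or a mixed graph whose underlying graph is $K_4$ and among whose three mixed $4$-cycles two are positive and one is semi-negative.
   Context: A mixed graph $M_G$ is obtained from a finite simple graph $G$ by orienting the edges of some subset of $E(G)$; it is connected if $G$ is. With $\omega=\frac{1+\mathbf{i}\sqrt3}{2}$, $N(M_G)=(n_{st})$ has entry $\omega$ for an arc from $u_s$ to $u_t$, $\bar\omega$ for an arc from $u_t$ to $u_s$, $1$ for an undirected edge, $0$ otherwise. A mixed cycle is a mixed subgraph whose underlying graph is a cycle $v_1\cdots v_lv_1$, with weight $n_{12}\cdots n_{l1}$; positive means weight $1$, semi-negative means weight $-\omega$ or $-\bar\omega$. A mixed triangle is a mixed graph whose underlying graph is $K_3$. Switching: $\mathbb{T}_6=\{1,-1,\omega,\bar\omega,-\omega,-\bar\omega\}$; given a partition $V=\bigcup_{j\in\mathbb{T}_6}V_j$ into possibly empty sets, an edge or arc $xy$ has type $(j,k)$ if $x\in V_j,y\in V_k$ (arcs directed from $x$ to $y$); the partition is admissible if every undirected edge has type $(j,j)$ or $(j,\omega j)$ and every arc has type $(j,j)$, $(j,\bar\omega j)$ or $(j,-\omega j)$ for some $j$; a three-way switching replaces each undirected edge of type $(j,\omega j)$ by an arc from $V_j$ to $V_{\omega j}$, each arc of type $(j,\bar\omega j)$ by an undirected edge, and reverses each arc of type $(j,-\omega j)$; two mixed graphs on the same vertex set are switching equivalent if one is obtained from the other by three-way switchings and reversing all arcs.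 Two vertices $u,v$ of $M_G$ are twins if $M_G$ is switching equivalent to a mixed graph $M'_G$ with $N(M'_G)_{uj}=N(M'_G)_{vj}$ for all vertices $j$. $T_{M_G}$ is the induced mixed subgraph obtained from $M_G$ by deleting all but one vertex from every set of twins. *)

theory Defs
  imports Complex_Main "Jordan_Normal_Form.DL_Rank"
begin

text \<open>A mixed graph on the vertex set {0..<n}: E is the (symmetric, irreflexive)
  edge relation of the underlying simple graph G; D x y means that the edge xy
  is oriented as an arc from x to y.\<close>

definition mixed_graph :: "nat \<Rightarrow> (nat \<Rightarrow> nat \<Rightarrow> bool) \<Rightarrow> (nat \<Rightarrow> nat \<Rightarrow> bool) \<Rightarrow> bool" where
  "mixed_graph n E D \<longleftrightarrow>
     (\<forall>x y. E x y \<longrightarrow> x < n \<and> y < n \<and> x \<noteq> y \<and> E y x) \<and>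
     (\<forall>x y. D x y \<longrightarrow> E x y \<and> \<not> D y x)"

definition undir :: "(nat \<Rightarrow> nat \<Rightarrow> bool) \<Rightarrow> (nat \<Rightarrow> nat \<Rightarrow> bool) \<Rightarrow> nat \<Rightarrow> nat \<Rightarrow> bool" where
  "undir E D x y \<longleftrightarrow> E x y \<and> \<not> D x y \<and> \<not> D y x"

definition connected_graph :: "nat \<Rightarrow> (nat \<Rightarrow> nat \<Rightarrow> bool) \<Rightarrow> bool" where
  "connected_graph n E \<longleftrightarrow> (\<forall>u<n. \<forall>v<n. E\<^sup>*\<^sup>* u v)"

definition omega :: complex where
  "omega = (1 + \<i> * complex_of_real (sqrt 3)) / 2"

definition Nent :: "(nat \<Rightarrow> nat \<Rightarrow> bool) \<Rightarrow> (nat \<Rightarrow> nat \<Rightarrow> bool) \<Rightarrow> nat \<Rightarrow> nat \<Rightarrow> complex" where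
  "Nent E D s t = (if D s t then omega else if D t s then cnj omega
                   else if E s t then 1 else 0)"

definition Nmat :: "nat \<Rightarrow> (nat \<Rightarrow> nat \<Rightarrow> bool) \<Rightarrow> (nat \<Rightarrow> nat \<Rightarrow> bool) \<Rightarrow> complex mat" where
  "Nmat n E D = mat n n (\<lambda>(s, t). Nent E D s t)"

definition T6 :: "complex set" where
  "T6 = {1, -1, omega, cnj omega, - omega, - cnj omega}"

text \<open>A partition V = \<Union>_{j\<in>T6} V_j is encoded by p : V \<rightarrow> T6 (x \<in> V_{p x}).\<close>
definition admissible :: "nat \<Rightarrow> (nat \<Rightarrow> nat \<Rightarrow> bool) \<Rightarrow> (nat \<Rightarrow> nat \<Rightarrow> bool) \<Rightarrow> (nat \<Rightarrow> complex) \<Rightarrow> bool" where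
  "admissible n E D p \<longleftrightarrow>
     (\<forall>x<n. p x \<in> T6) \<and>
     (\<forall>x y. undir E D x y \<longrightarrow> p y = p x \<or> p y = omega * p x \<or> p x = omega * p y) \<and>
     (\<forall>x y. D x y \<longrightarrow> p y = p x \<or> p y = cnj omega * p x \<or> p y = - omega * p x)"

text \<open>Three-way switching: undirected edges of type (j, \<omega> j) become arcs from V_j
  to V_{\<omega> j}; arcs of type (j, \<omega>bar j) become undirected; arcs of type (j, -\<omega> j)
  are reversed; everything else is unchanged.\<close>
definition switch :: "(nat \<Rightarrow> nat \<Rightarrow> bool) \<Rightarrow> (nat \<Rightarrow> nat \<Rightarrow> bool) \<Rightarrow> (nat \<Rightarrow> complex) \<Rightarrow> nat \<Rightarrow> nat \<Rightarrow> bool" where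
  "switch E D p x y \<longleftrightarrow>
     (undir E D x y \<and> p y = omega * p x) \<or>
     (D x y \<and> p y = p x) \<or>
     (D y x \<and> p x = - omega * p y)"

definition switch_step :: "nat \<Rightarrow> (nat \<Rightarrow> nat \<Rightarrow> bool) \<Rightarrow> (nat \<Rightarrow> nat \<Rightarrow> bool) \<Rightarrow> (nat \<Rightarrow> nat \<Rightarrow> bool) \<Rightarrow> bool" where
  "switch_step n E D D' \<longleftrightarrow>
     (\<exists>p. admissible n E D p \<and> D' = switch E D p) \<or> D' = (\<lambda>x y. D y x)"

definition switching_equiv :: "nat \<Rightarrow> (nat \<Rightarrow> nat \<Rightarrow> bool) \<Rightarrow> (nat \<Rightarrow> nat \<Rightarrow> bool) \<Rightarrow> (nat \<Rightarrow> nat \<Rightarrow> bool) \<Rightarrow> bool" where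
  "switching_equiv n E D D' \<longleftrightarrow> (switch_step n E)\<^sup>*\<^sup>* D D'"

definition twins :: "nat \<Rightarrow> (nat \<Rightarrow> nat \<Rightarrow> bool) \<Rightarrow> (nat \<Rightarrow> nat \<Rightarrow> bool) \<Rightarrow> nat \<Rightarrow> nat \<Rightarrow> bool" where
  "twins n E D u v \<longleftrightarrow> u < n \<and> v < n \<and>
     (\<exists>D'. switching_equiv n E D D' \<and> (\<forall>j<n. Nent E D' u j = Nent E D' v j))"

text \<open>S is a set of representatives obtained by keeping exactly one vertex from
  every set of twins; T_{M_G} is the induced mixed subgraph on S.\<close>
definition twin_reduction :: "nat \<Rightarrow> (nat \<Rightarrow> nat \<Rightarrow> bool) \<Rightarrow> (nat \<Rightarrow> nat \<Rightarrow> bool) \<Rightarrow> nat set \<Rightarrow> bool" where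
  "twin_reduction n E D S \<longleftrightarrow> S \<subseteq> {0..<n} \<and>
     (\<forall>v<n. \<exists>s\<in>S. twins n E D v s) \<and>
     (\<forall>s\<in>S. \<forall>t\<in>S. s \<noteq> t \<longrightarrow> \<not> twins n E D s t)"

definition is_mixed_triangle :: "(nat \<Rightarrow> nat \<Rightarrow> bool) \<Rightarrow> nat set \<Rightarrow> bool" where
  "is_mixed_triangle E S \<longleftrightarrow> card S = 3 \<and> (\<forall>x\<in>S. \<forall>y\<in>S. x \<noteq> y \<longrightarrow> E x y)"

definition cycle4_weight :: "(nat \<Rightarrow> nat \<Rightarrow> bool) \<Rightarrow> (nat \<Rightarrow> nat \<Rightarrow> bool) \<Rightarrow> nat \<Rightarrow> nat \<Rightarrow> nat \<Rightarrow> nat \<Rightarrow> complex" where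
  "cycle4_weight E D a b c d = Nent E D a b * Nent E D b c * Nent E D c d * Nent E D d a"

definition positive_w :: "complex \<Rightarrow> bool" where
  "positive_w w \<longleftrightarrow> w = 1"

definition semi_negative_w :: "complex \<Rightarrow> bool" where
  "semi_negative_w w \<longleftrightarrow> w = - omega \<or> w = - cnj omega"

definition is_K4_two_pos_one_semineg :: "(nat \<Rightarrow> nat \<Rightarrow> bool) \<Rightarrow> (nat \<Rightarrow> nat \<Rightarrow> bool) \<Rightarrow> nat set \<Rightarrow> bool" where
  "is_K4_two_pos_one_semineg E D S \<longleftrightarrow>
     card S = 4 \<and> (\<forall>x\<in>S. \<forall>y\<in>S. x \<noteq> y \<longrightarrow> E x y) \<and>
     (\<exists>a b c d. S = {a, b, c, d} \<and>
        positive_w (cycle4_weight E D a b c d) \<and>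
        positive_w (cycle4_weight E D a b d c) \<and>
        semi_negative_w (cycle4_weight E D a c b d))"

end

theory Submission
  imports Defs
begin

text \<open>
  The matrix \<open>N\<close> is Hermitian with zero diagonal, and switching acts on it as a diagonal
  unitary congruence, possibly composed with conjugation. Hence twins have proportional rows and
  columns, while rows differing by a sixth root of unity belong to twins; so the columns of the
  representatives \<open>S\<close> span the column space, and distinct representatives never have
  columns differing by a sixth root of unity.

  If \<open>rank N = 3\<close>, three independent columns may be taken at representatives \<open>s\<^sub>1, s\<^sub>2, s\<^sub>3\<close>.
  A non-edge \<open>s\<^sub>i s\<^sub>j\<close> would make the rows \<open>s\<^sub>i\<close> and \<open>s\<^sub>j\<close>, hence the columns, dependent; so
  the \<open>s\<^sub>i\<close> form a triangle, whose block \<open>B\<close> has \<open>det B = w + cnj w \<noteq> 0\<close> for a sixth root of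
  unity \<open>w\<close>. All entries are then determined by the columns restricted to the triangle:
  \<open>det B * N u v = c\<^sub>u\<^sup>* adj B c\<^sub>v\<close>. A further representative \<open>t\<close> has a nonzero restricted
  column \<open>c\<^sub>t\<close> with \<open>c\<^sub>t\<^sup>* adj B c\<^sub>t = 0\<close> that is no unit multiple of a column of \<open>B\<close>; a finite
  inspection of the entries \<open>{0, 1, \<omega>, cnj \<omega>}\<close> shows that this forces the cycle condition on the
  \<open>K\<^sub>4\<close> spanned by \<open>s\<^sub>1, s\<^sub>2, s\<^sub>3, t\<close>, and that two such columns differ by a unit, so \<open>t\<close> is
  unique. Conversely a triangle gives three independent columns, and for the \<open>K\<^sub>4\<close> the same
  identity \<open>c\<^sub>t\<^sup>* adj B c\<^sub>t = 0\<close> puts the fourth column into the span of the other three.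

  The finite inspections are decided by evaluation in \<open>\<int>[\<omega>]\<close>, encoding \<open>a + b \<omega>\<close> as \<open>(a, b)\<close>.
\<close>

section \<open>Evaluation in the Eisenstein integers\<close>

lemma omega_mult_omega: "omega * omega = omega - 1"
proof -
  have "complex_of_real (sqrt 3) * complex_of_real (sqrt 3) = 3"
    by (simp flip: of_real_mult)
  then show ?thesis
    unfolding omega_def by (simp add: field_simps)
qed

lemma cnj_omega: "cnj omega = 1 - omega"
  unfolding omega_def by (simp add: complex_eq_iff)

type_synonym eisenstein = "int \<times> int"

fun of_eis :: "eisenstein \<Rightarrow> complex" where
  "of_eis (a, b) = of_int a + of_int b * omega"

fun eis_mult :: "eisenstein \<Rightarrow> eisenstein \<Rightarrow> eisenstein" where
  "eis_mult (a, b) (c, d) = (a * c - b * d, a * d + b * c + b * d)"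

fun eis_add :: "eisenstein \<Rightarrow> eisenstein \<Rightarrow> eisenstein" where
  "eis_add (a, b) (c, d) = (a + c, b + d)"

fun eis_uminus :: "eisenstein \<Rightarrow> eisenstein" where
  "eis_uminus (a, b) = (- a, - b)"

fun eis_cnj :: "eisenstein \<Rightarrow> eisenstein" where
  "eis_cnj (a, b) = (a + b, - b)"

lemma of_eis_mult: "of_eis p * of_eis q = of_eis (eis_mult p q)"
proof (cases p, cases q)
  fix a b c d assume pq: "p = (a, b)" "q = (c, d)"
  have "(of_int a + of_int b * omega) * (of_int c + of_int d * omega)
      = of_int a * of_int c + (of_int a * of_int d + of_int b * of_int c) * omega
        + of_int b * of_int d * (omega * omega)"
    by (simp add: algebra_simps)
  then show ?thesis
    using pq by (simp add: omega_mult_omega algebra_simps)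
qed

lemma of_eis_add: "of_eis p + of_eis q = of_eis (eis_add p q)"
  by (cases p, cases q) (simp add: algebra_simps)

lemma of_eis_uminus: "- of_eis p = of_eis (eis_uminus p)"
  by (cases p) (simp add: algebra_simps)

lemma of_eis_diff: "of_eis p - of_eis q = of_eis (eis_add p (eis_uminus q))"
  by (metis diff_conv_add_uminus of_eis_add of_eis_uminus)

lemma of_eis_cnj: "cnj (of_eis p) = of_eis (eis_cnj p)"
  by (cases p) (simp add: cnj_omega algebra_simps)

lemma of_eis_eq_iff: "of_eis p = of_eis q \<longleftrightarrow> p = q"
proof
  assume eq: "of_eis p = of_eis q"
  obtain a b c d where pq: "p = (a, b)" "q = (c, d)"
    by (cases p, cases q)
  have "Im omega \<noteq> 0" "Re omega = 1 / 2"
    unfolding omega_def by simp_all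
  then show "p = q"
    using arg_cong[OF eq, of Im] arg_cong[OF eq, of Re] unfolding pq by auto
qed simp

text \<open>Oriented towards \<^const>\<open>of_eis\<close>, so that \<open>simp only: of_eis_fold\<close> moves a complex
  expression built from images of \<^const>\<open>of_eis\<close> into \<open>\<int>[\<omega>]\<close>, where \<open>code_simp\<close> evaluates it.\<close>

lemma of_eis_0: "0 = of_eis (0, 0)"
  and of_eis_1: "1 = of_eis (1, 0)"
  and of_eis_omega: "omega = of_eis (0, 1)"
  by simp_all

lemmas of_eis_fold =
  of_eis_mult of_eis_add of_eis_uminus of_eis_diff of_eis_cnj of_eis_eq_iff
  of_eis_0 of_eis_1 of_eis_omega

definition eis_entries :: "eisenstein list" where
  "eis_entries = [(0, 0), (1, 0), (0, 1), (1, -1)]"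

definition eis_units :: "eisenstein list" where
  "eis_units = [(1, 0), (0, 1), (1, -1)]"

definition eis_T6 :: "eisenstein list" where
  "eis_T6 = [(1, 0), (-1, 0), (0, 1), (1, -1), (0, -1), (-1, 1)]"

lemma entries_eq_of_eis: "{0, 1, omega, cnj omega} = of_eis ` set eis_entries"
  by (simp add: eis_entries_def cnj_omega)

lemma units_eq_of_eis: "{1, omega, cnj omega} = of_eis ` set eis_units"
  by (simp add: eis_units_def cnj_omega)

lemma T6_eq_of_eis: "T6 = of_eis ` set eis_T6"
  by (simp add: T6_def eis_T6_def cnj_omega algebra_simps)

lemma T6_cnj_mult_self:
  assumes "u \<in> T6"
  shows "cnj u * u = 1"
proof -
  have "\<forall>a\<in>set eis_T6. cnj (of_eis a) * of_eis a = 1"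
    by (simp only: of_eis_fold) code_simp
  then show ?thesis
    using assms unfolding T6_eq_of_eis by blast
qed

lemma T6_cnj: "u \<in> T6 \<Longrightarrow> cnj u \<in> T6"
  unfolding T6_def by (auto simp: cnj_omega)

lemma omega_neq:
  "omega \<noteq> 0" "omega \<noteq> 1" "cnj omega \<noteq> 1" "- omega \<noteq> 1" "omega * omega \<noteq> 1"
  "cnj omega \<noteq> omega" "cnj omega \<noteq> - omega"
  by (simp only: of_eis_fold, code_simp)+

lemma omega_mult_cnj_omega: "omega * cnj omega = 1"
  by (simp only: of_eis_fold) code_simp

lemma omega_mult_omega_uminus: "omega * - omega = cnj omega"
  by (simp only: of_eis_fold) code_simp

lemma cnj_omega_mult_cnj_omega: "cnj omega * cnj omega = - omega"
  by (simp only: of_eis_fold) code_simp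

section \<open>The matrix of a mixed graph and switching\<close>

lemma mixed_graph_sym: "mixed_graph n E D \<Longrightarrow> E x y \<Longrightarrow> E y x"
  and mixed_graph_irrefl: "mixed_graph n E D \<Longrightarrow> \<not> E x x"
  and mixed_graph_bounded: "mixed_graph n E D \<Longrightarrow> E x y \<Longrightarrow> x < n \<and> y < n"
  and mixed_graph_arc_edge: "mixed_graph n E D \<Longrightarrow> D x y \<Longrightarrow> E x y"
  and mixed_graph_arc_asym: "mixed_graph n E D \<Longrightarrow> D x y \<Longrightarrow> \<not> D y x"
  unfolding mixed_graph_def by blast+

definition hollow_hermitian :: "(nat \<Rightarrow> nat \<Rightarrow> complex) \<Rightarrow> bool" where
  "hollow_hermitian M \<longleftrightarrow> (\<forall>i j. M j i = cnj (M i j)) \<and> (\<forall>i. M i i = 0)"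

lemma hollow_hermitian_Nent:
  assumes "mixed_graph n E D"
  shows "hollow_hermitian (Nent E D)"
  using assms unfolding hollow_hermitian_def mixed_graph_def Nent_def by (auto simp: cnj_omega)

lemma Nent_swap: "mixed_graph n E D \<Longrightarrow> Nent E D t s = cnj (Nent E D s t)"
  and Nent_diag: "mixed_graph n E D \<Longrightarrow> Nent E D s s = 0"
  using hollow_hermitian_Nent unfolding hollow_hermitian_def by blast+

lemma Nent_eq_0_iff: "mixed_graph n E D \<Longrightarrow> Nent E D s t = 0 \<longleftrightarrow> \<not> E s t"
  using omega_neq(1) unfolding mixed_graph_def Nent_def by auto

lemma Nent_in_entries: "Nent E D s t \<in> {0, 1, omega, cnj omega}"
  and Nent_in_units: "E s t \<Longrightarrow> Nent E D s t \<in> {1, omega, cnj omega}"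
  unfolding Nent_def by auto

lemma Nent_outside: "mixed_graph n E D \<Longrightarrow> \<not> (s < n \<and> t < n) \<Longrightarrow> Nent E D s t = 0"
  using Nent_eq_0_iff mixed_graph_bounded by blast

lemma admissible_T6: "admissible n E D p \<Longrightarrow> x < n \<Longrightarrow> p x \<in> T6"
  unfolding admissible_def by blast

lemma Nent_switch_undir:
  assumes mg: "mixed_graph n E D" and adm: "admissible n E D p" and xy: "undir E D x y"
  shows "Nent E (switch E D p) x y = cnj (p x) * Nent E D x y * p y"
proof -
  have "x < n" "y < n"
    using xy mixed_graph_bounded[OF mg] unfolding undir_def by blast+
  then have unit: "cnj (p x) * p x = 1" "cnj (p y) * p y = 1"
    using T6_cnj_mult_self admissible_T6[OF adm] by blast+
  have yx: "undir E D y x"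
    using xy mixed_graph_sym[OF mg] unfolding undir_def by blast
  have N: "Nent E D x y = 1"
    using xy unfolding undir_def Nent_def by simp
  have N': "Nent E (switch E D p) x y =
      (if p y = omega * p x then omega else if p x = omega * p y then cnj omega else 1)"
    using xy yx unfolding undir_def switch_def Nent_def by auto
  consider "p y = p x" | "p y = omega * p x" | "p x = omega * p y"
    using adm xy unfolding admissible_def by blast
  then show ?thesis
  proof cases
    case 1
    then show ?thesis
      using N N' unit omega_neq by auto
  next
    case 2
    then show ?thesis
      using N N' unit by (simp add: algebra_simps)
  next
    case 3
    have "p y \<noteq> omega * p x"
    proof
      assume "p y = omega * p x"
      then have "(omega * omega) * p y = 1 * p y"
        using 3 by (simp add: algebra_simps)
      then show False
        using unit omega_neq by (metis mult_cancel_right mult_zero_right zero_neq_one)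
    qed
    then show ?thesis
      using 3 N N' unit by (simp add: algebra_simps)
  qed
qed

lemma Nent_switch_arc:
  assumes mg: "mixed_graph n E D" and adm: "admissible n E D p" and xy: "D x y"
  shows "Nent E (switch E D p) x y = cnj (p x) * Nent E D x y * p y"
proof -
  have "x < n"
    using xy mixed_graph_bounded[OF mg] mixed_graph_arc_edge[OF mg] by blast
  then have unit: "cnj (p x) * p x = 1"
    using T6_cnj_mult_self admissible_T6[OF adm] by blast
  have "\<not> D y x"
    using xy mixed_graph_arc_asym[OF mg] by blast
  have N: "Nent E D x y = omega"
    using xy unfolding Nent_def by simp
  have N': "Nent E (switch E D p) x y =
      (if p y = p x then omega else if p y = - omega * p x then cnj omega else 1)"
    using xy \<open>\<not> D y x\<close> mixed_graph_arc_edge[OF mg xy]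
    unfolding undir_def switch_def Nent_def by auto
  consider "p y = p x" | "p y = cnj omega * p x" | "p y = - omega * p x"
    using adm xy unfolding admissible_def by blast
  then show ?thesis
  proof cases
    case 1
    then show ?thesis
      using N N' unit by (simp add: algebra_simps)
  next
    case 2
    have "p x \<noteq> 0"
      using unit by auto
    have "p y \<noteq> p x"
      using 2 \<open>p x \<noteq> 0\<close> omega_neq by auto
    moreover have "p y \<noteq> - omega * p x"
      using 2 omega_neq mult_right_cancel[OF \<open>p x \<noteq> 0\<close>, of "cnj omega" "- omega"] by metis
    ultimately show ?thesis
      using 2 N N' unit omega_mult_cnj_omega by (simp add: algebra_simps)
  next
    case 3
    then have "p y \<noteq> p x"
      using unit omega_neq by (metis mult_cancel_right2 mult_zero_right zero_neq_one)
    then show ?thesis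
      using 3 N N' unit omega_mult_omega_uminus by (simp add: algebra_simps)
  qed
qed

lemma switch_mixed_graph:
  assumes mg: "mixed_graph n E D" and adm: "admissible n E D p"
  shows "mixed_graph n E (switch E D p)"
proof -
  have nz: "x < n \<Longrightarrow> p x \<noteq> 0" for x
    using T6_cnj_mult_self[OF admissible_T6[OF adm]] by fastforce
  have edge: "E x y" if "switch E D p x y" for x y
    using that mixed_graph_arc_edge[OF mg] mixed_graph_sym[OF mg]
    unfolding switch_def undir_def by blast
  have "\<not> switch E D p y x" if xy: "switch E D p x y" for x y
  proof
    assume yx: "switch E D p y x"
    have "x < n" "y < n"
      using edge[OF xy] mixed_graph_bounded[OF mg] by blast+
    have "\<not> (D x y \<and> D y x)"
      using mixed_graph_arc_asym[OF mg] by blast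
    then consider "p y = omega * p x" "p x = omega * p y" | "p y = p x" "p y = - omega * p x"
      | "p x = - omega * p y" "p x = p y"
      using xy yx unfolding switch_def undir_def by blast
    then show False
    proof cases
      case 1
      then have "(omega * omega) * p x = 1 * p x"
        by (simp add: algebra_simps)
      then show False
        using omega_neq nz[OF \<open>x < n\<close>] mult_right_cancel by metis
    next
      case 2
      then show False
        using omega_neq nz[OF \<open>x < n\<close>] mult_cancel_right2 by metis
    next
      case 3
      then show False
        using omega_neq nz[OF \<open>y < n\<close>] mult_cancel_right2 by metis
    qed
  qed
  then show ?thesis
    using mg edge unfolding mixed_graph_def by blast
qed

lemma Nent_switch:
  assumes mg: "mixed_graph n E D" and adm: "admissible n E D p"
  shows "Nent E (switch E D p) x y = cnj (p x) * Nent E D x y * p y"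
proof (cases "D y x")
  case True
  have "Nent E (switch E D p) x y = cnj (Nent E (switch E D p) y x)"
    using Nent_swap[OF switch_mixed_graph[OF mg adm]] .
  also have "\<dots> = cnj (cnj (p y) * Nent E D y x * p x)"
    using Nent_switch_arc[OF mg adm True] by simp
  finally show ?thesis
    using Nent_swap[OF mg, of x y] by (simp add: algebra_simps)
next
  case False
  consider "\<not> E x y" | "D x y" | "undir E D x y"
    using False unfolding undir_def by blast
  then show ?thesis
  proof cases
    case 1
    then have "\<not> switch E D p x y" "\<not> switch E D p y x"
      using mixed_graph_sym[OF mg] mixed_graph_arc_edge[OF mg]
      unfolding switch_def undir_def by blast+
    then show ?thesis
      using 1 mixed_graph_arc_edge[OF mg] mixed_graph_sym[OF mg] unfolding Nent_def by auto
  qed (use Nent_switch_arc[OF mg adm] Nent_switch_undir[OF mg adm] in blast)+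
qed

lemma reverse_mixed_graph: "mixed_graph n E D \<Longrightarrow> mixed_graph n E (\<lambda>x y. D y x)"
  unfolding mixed_graph_def by blast

lemma Nent_reverse: "mixed_graph n E D \<Longrightarrow> Nent E (\<lambda>x y. D y x) x y = cnj (Nent E D x y)"
  using mixed_graph_arc_asym[of n E D x y] by (auto simp: Nent_def cnj_omega)

lemma admissibleI:
  assumes mg: "mixed_graph n E D" and T6: "\<And>x. x < n \<Longrightarrow> p x \<in> T6"
    and units: "\<And>x y. E x y \<Longrightarrow> cnj (p x) * Nent E D x y * p y \<in> {1, omega, cnj omega}"
  shows "admissible n E D p"
proof -
  have ratio: "p y = (cnj (p x) * p y) * p x" if "E x y" for x y
  proof -
    have "x < n"
      using that mixed_graph_bounded[OF mg] by blast
    then show ?thesis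
      using T6_cnj_mult_self[OF T6] by (simp add: algebra_simps)
  qed
  have "p y = p x \<or> p y = omega * p x \<or> p x = omega * p y" if "undir E D x y" for x y
  proof -
    define w where "w = cnj (p x) * p y"
    have "w \<in> {1, omega, cnj omega}"
      using that units[of x y] unfolding undir_def Nent_def w_def by simp
    moreover have "omega * (cnj omega * p x) = p x"
      using omega_mult_cnj_omega by (simp flip: mult.assoc)
    ultimately show ?thesis
      using that ratio[of x y] unfolding undir_def w_def[symmetric] by auto
  qed
  moreover have "p y = p x \<or> p y = cnj omega * p x \<or> p y = - omega * p x" if "D x y" for x y
  proof -
    define w where "w = cnj (p x) * p y"
    have "E x y"
      using that mixed_graph_arc_edge[OF mg] by blast
    have "omega * w \<in> {1, omega, cnj omega}"
      using that units[OF \<open>E x y\<close>] unfolding Nent_def w_def by (simp add: algebra_simps)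
    moreover have w: "w = cnj omega * (omega * w)"
      using omega_mult_cnj_omega by (simp add: algebra_simps)
    ultimately have "w = cnj omega * 1 \<or> w = cnj omega * omega \<or> w = cnj omega * cnj omega"
      by (metis insert_iff singletonD)
    then have "w \<in> {cnj omega, 1, - omega}"
      using omega_mult_cnj_omega cnj_omega_mult_cnj_omega by (auto simp: mult.commute)
    then show ?thesis
      using ratio[OF \<open>E x y\<close>] unfolding w_def[symmetric] by auto
  qed
  ultimately show ?thesis
    using T6 unfolding admissible_def by blast
qed

definition diag_congruent :: "nat \<Rightarrow> (nat \<Rightarrow> nat \<Rightarrow> complex) \<Rightarrow> (nat \<Rightarrow> nat \<Rightarrow> complex) \<Rightarrow> bool" where
  "diag_congruent n M M' \<longleftrightarrow>
     (\<exists>q. (\<forall>x<n. q x \<noteq> 0) \<and> (\<forall>x<n. \<forall>y<n. M' x y = cnj (q x) * M x y * q y))"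

lemma diag_congruent_refl: "diag_congruent n M M"
  unfolding diag_congruent_def by (rule exI[of _ "\<lambda>_. 1"]) simp

lemma diag_congruent_trans:
  assumes "diag_congruent n M M'" and "diag_congruent n M' M''"
  shows "diag_congruent n M M''"
proof -
  obtain q q' where q: "\<forall>x<n. q x \<noteq> 0" "\<forall>x<n. \<forall>y<n. M' x y = cnj (q x) * M x y * q y"
    and q': "\<forall>x<n. q' x \<noteq> 0" "\<forall>x<n. \<forall>y<n. M'' x y = cnj (q' x) * M' x y * q' y"
    using assms unfolding diag_congruent_def by blast
  show ?thesis
    unfolding diag_congruent_def
    by (rule exI[of _ "\<lambda>x. q x * q' x"]) (simp add: q q' algebra_simps)
qed

lemma diag_congruent_cnj:
  assumes "diag_congruent n M M'"
  shows "diag_congruent n (\<lambda>x y. cnj (M x y)) (\<lambda>x y. cnj (M' x y))"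
proof -
  obtain q where "\<forall>x<n. q x \<noteq> 0" "\<forall>x<n. \<forall>y<n. M' x y = cnj (q x) * M x y * q y"
    using assms unfolding diag_congruent_def by blast
  then show ?thesis
    unfolding diag_congruent_def by (intro exI[of _ "\<lambda>x. cnj (q x)"]) simp
qed

lemma diag_congruent_switch:
  assumes "mixed_graph n E D" and "admissible n E D p"
  shows "diag_congruent n (Nent E D) (Nent E (switch E D p))"
  unfolding diag_congruent_def
proof (intro exI conjI allI impI)
  show "p x \<noteq> 0" if "x < n" for x
    using T6_cnj_mult_self[OF admissible_T6[OF assms(2) that]] by auto
  show "Nent E (switch E D p) x y = cnj (p x) * Nent E D x y * p y" for x y
    using Nent_switch[OF assms] .
qed

lemma switching_equiv_diag_congruent:
  assumes "switching_equiv n E D D'" and mg: "mixed_graph n E D"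
  shows "mixed_graph n E D' \<and> (diag_congruent n (Nent E D) (Nent E D') \<or>
    diag_congruent n (\<lambda>x y. cnj (Nent E D x y)) (Nent E D'))"
  using assms(1) unfolding switching_equiv_def
proof (induction rule: rtranclp_induct)
  case base
  then show ?case
    using mg diag_congruent_refl by blast
next
  case (step D1 D2)
  then have mg1: "mixed_graph n E D1" by blast
  from step.hyps(2) show ?case
    unfolding switch_step_def
  proof (elim disjE exE conjE)
    fix p
    assume "admissible n E D1 p" and "D2 = switch E D1 p"
    then show ?case
      using step.IH switch_mixed_graph[OF mg1] diag_congruent_switch[OF mg1]
        diag_congruent_trans by blast
  next
    assume D2: "D2 = (\<lambda>x y. D1 y x)"
    then have "Nent E D2 = (\<lambda>x y. cnj (Nent E D1 x y))"
      using Nent_reverse[OF mg1] by blast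
    then show ?case
      using step.IH reverse_mixed_graph[OF mg1] diag_congruent_cnj D2 by fastforce
  qed
qed

lemma diag_congruent_equal_rows:
  assumes "diag_congruent n M M'" and uv: "u < n" "v < n" and rows: "\<forall>j<n. M' u j = M' v j"
  shows "\<exists>m. m \<noteq> 0 \<and> (\<forall>j<n. M u j = m * M v j)"
proof -
  obtain q where q: "\<forall>x<n. q x \<noteq> 0" "\<forall>x<n. \<forall>y<n. M' x y = cnj (q x) * M x y * q y"
    using assms(1) unfolding diag_congruent_def by blast
  have "M u j = (cnj (q v) / cnj (q u)) * M v j" if "j < n" for j
  proof -
    have "(cnj (q u) * M u j) * q j = (cnj (q v) * M v j) * q j"
      using q(2) rows uv that by (simp add: mult.assoc)
    then have "cnj (q u) * M u j = cnj (q v) * M v j"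
      using q(1) that by simp
    then show ?thesis
      using q(1) uv by (simp add: field_simps)
  qed
  then show ?thesis
    using q(1) uv by (intro exI[of _ "cnj (q v) / cnj (q u)"]) simp
qed

lemma twins_row_multiple:
  assumes mg: "mixed_graph n E D" and "twins n E D u v"
  shows "\<exists>m. m \<noteq> 0 \<and> (\<forall>j<n. Nent E D u j = m * Nent E D v j)"
proof -
  obtain D' where uv: "u < n" "v < n" and "switching_equiv n E D D'"
    and rows: "\<forall>j<n. Nent E D' u j = Nent E D' v j"
    using assms(2) unfolding twins_def by blast
  then consider "diag_congruent n (Nent E D) (Nent E D')"
    | "diag_congruent n (\<lambda>x y. cnj (Nent E D x y)) (Nent E D')"
    using switching_equiv_diag_congruent[OF _ mg] by blast
  then show ?thesis
  proof cases
    case 1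
    then show ?thesis
      using diag_congruent_equal_rows[OF 1 uv rows] by blast
  next
    case 2
    then obtain m where "m \<noteq> 0" "\<forall>j<n. cnj (Nent E D u j) = m * cnj (Nent E D v j)"
      using diag_congruent_equal_rows[OF 2 uv rows] by blast
    then show ?thesis
      by (intro exI[of _ "cnj m"]) (metis complex_cnj_cnj complex_cnj_mult complex_cnj_zero_iff)
  qed
qed

lemma admissible_single_label:
  assumes mg: "mixed_graph n E D" and "s \<noteq> t" and m: "m \<in> T6"
    and row_s: "\<And>j. Nent E D s j = m * Nent E D t j"
  shows "admissible n E D (\<lambda>x. if x = s then m else 1)"
proof (rule admissibleI[OF mg])
  show "(if x = s then m else 1) \<in> T6" for x
    using m unfolding T6_def by simp
next
  fix x y
  assume "E x y"
  then have "x \<noteq> y" "Nent E D x y \<noteq> 0"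
    using mixed_graph_irrefl[OF mg] Nent_eq_0_iff[OF mg] by blast+
  have unit: "cnj m * m = 1"
    using T6_cnj_mult_self[OF m] .
  consider "x = s" | "y = s" | "x \<noteq> s" "y \<noteq> s"
    by blast
  then show "cnj (if x = s then m else 1) * Nent E D x y * (if y = s then m else 1) \<in> {1, omega, cnj omega}"
  proof cases
    case 1
    then have "cnj m * Nent E D x y = Nent E D t y" "E t y"
      using row_s[of y] unit \<open>Nent E D x y \<noteq> 0\<close> Nent_eq_0_iff[OF mg] by (auto simp: algebra_simps)
    then show ?thesis
      using 1 \<open>x \<noteq> y\<close> Nent_in_units by simp
  next
    case 2
    have "Nent E D x s = cnj m * Nent E D x t"
      using row_s[of x] Nent_swap[OF mg, of x s] Nent_swap[OF mg, of x t] by simp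
    then have "Nent E D x y * m = Nent E D x t" "E x t"
      using 2 unit \<open>Nent E D x y \<noteq> 0\<close> Nent_eq_0_iff[OF mg] by (auto simp: algebra_simps)
    then show ?thesis
      using 2 \<open>x \<noteq> y\<close> Nent_in_units by simp
  next
    case 3
    then show ?thesis
      using Nent_in_units[of E x y D] \<open>E x y\<close> by simp
  qed
qed

lemma twins_if_row_T6_multiple:
  assumes mg: "mixed_graph n E D" and st: "s < n" "t < n" and m: "m \<in> T6"
    and rows: "\<forall>j<n. Nent E D s j = m * Nent E D t j"
  shows "twins n E D s t"
proof (cases "s = t")
  case True
  then show ?thesis
    unfolding twins_def switching_equiv_def using st by blast
next
  case False
  define p where "p = (\<lambda>x. if x = s then m else 1)"
  have row_s: "Nent E D s j = m * Nent E D t j" for j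
    using rows Nent_outside[OF mg] st by (cases "j < n") auto
  then have adm: "admissible n E D p"
    unfolding p_def using admissible_single_label[OF mg False m] by blast
  have "Nent E (switch E D p) s j = Nent E (switch E D p) t j" for j
    using Nent_switch[OF mg adm] row_s[of j] T6_cnj_mult_self[OF m] False
    unfolding p_def by (simp add: algebra_simps)
  moreover have "switching_equiv n E D (switch E D p)"
    unfolding switching_equiv_def switch_step_def using adm by blast
  ultimately show ?thesis
    unfolding twins_def using st by blast
qed

section \<open>Three columns of a square matrix\<close>

definition col_in_span3 :: "nat \<Rightarrow> (nat \<Rightarrow> nat \<Rightarrow> 'a::field) \<Rightarrow> nat \<Rightarrow> nat \<Rightarrow> nat \<Rightarrow> nat \<Rightarrow> bool" where
  "col_in_span3 n M a b c v \<longleftrightarrow>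
     (\<exists>x1 x2 x3. \<forall>i<n. M i v = x1 * M i a + x2 * M i b + x3 * M i c)"

definition cols_indep3 :: "nat \<Rightarrow> (nat \<Rightarrow> nat \<Rightarrow> 'a::field) \<Rightarrow> nat \<Rightarrow> nat \<Rightarrow> nat \<Rightarrow> bool" where
  "cols_indep3 n M a b c \<longleftrightarrow>
     (\<forall>y1 y2 y3. (\<forall>i<n. y1 * M i a + y2 * M i b + y3 * M i c = 0) \<longrightarrow> y1 = 0 \<and> y2 = 0 \<and> y3 = 0)"

lemma cols_indep3D:
  assumes "cols_indep3 n M a b c" and "\<forall>i<n. y1 * M i a + y2 * M i b + y3 * M i c = 0"
  shows "y1 = 0" "y2 = 0" "y3 = 0"
  using assms unfolding cols_indep3_def by blast+

lemma col_in_span3_swap12: "col_in_span3 n M a b c v \<longleftrightarrow> col_in_span3 n M b a c v"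
proof -
  have "(\<forall>i<n. M i v = x1 * M i a + x2 * M i b + x3 * M i c) \<longleftrightarrow>
      (\<forall>i<n. M i v = x2 * M i b + x1 * M i a + x3 * M i c)" for x1 x2 x3
    by (simp add: ac_simps)
  then show ?thesis
    unfolding col_in_span3_def by blast
qed

lemma col_in_span3_swap23: "col_in_span3 n M a b c v \<longleftrightarrow> col_in_span3 n M a c b v"
proof -
  have "(\<forall>i<n. M i v = x1 * M i a + x2 * M i b + x3 * M i c) \<longleftrightarrow>
      (\<forall>i<n. M i v = x1 * M i a + x3 * M i c + x2 * M i b)" for x1 x2 x3
    by (simp add: ac_simps)
  then show ?thesis
    unfolding col_in_span3_def by blast
qed

lemma cols_indep3_swap12: "cols_indep3 n M a b c \<longleftrightarrow> cols_indep3 n M b a c"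
proof -
  have "(\<forall>i<n. y1 * M i a + y2 * M i b + y3 * M i c = 0) \<longleftrightarrow>
      (\<forall>i<n. y2 * M i b + y1 * M i a + y3 * M i c = 0)" for y1 y2 y3
    by (simp add: ac_simps)
  then show ?thesis
    unfolding cols_indep3_def by blast
qed

lemma cols_indep3_swap23: "cols_indep3 n M a b c \<longleftrightarrow> cols_indep3 n M a c b"
proof -
  have "(\<forall>i<n. y1 * M i a + y2 * M i b + y3 * M i c = 0) \<longleftrightarrow>
      (\<forall>i<n. y1 * M i a + y3 * M i c + y2 * M i b = 0)" for y1 y2 y3
    by (simp add: ac_simps)
  then show ?thesis
    unfolding cols_indep3_def by blast
qed

lemma col_in_span3_self:
  shows "col_in_span3 n M a b c a" and "col_in_span3 n M a b c b" and "col_in_span3 n M a b c c"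
proof -
  have "\<forall>i<n. M i a = 1 * M i a + 0 * M i b + 0 * M i c"
    "\<forall>i<n. M i b = 0 * M i a + 1 * M i b + 0 * M i c"
    "\<forall>i<n. M i c = 0 * M i a + 0 * M i b + 1 * M i c"
    by simp_all
  then show "col_in_span3 n M a b c a" and "col_in_span3 n M a b c b" and "col_in_span3 n M a b c c"
    unfolding col_in_span3_def by blast+
qed

lemma col_in_span3_scale:
  assumes "col_in_span3 n M a b c s" and "\<forall>i<n. M i v = m * M i s"
  shows "col_in_span3 n M a b c v"
proof -
  obtain x1 x2 x3 where "\<forall>i<n. M i s = x1 * M i a + x2 * M i b + x3 * M i c"
    using assms(1) unfolding col_in_span3_def by blast
  then have "\<forall>i<n. M i v = (m * x1) * M i a + (m * x2) * M i b + (m * x3) * M i c"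
    using assms(2) by (simp add: algebra_simps)
  then show ?thesis
    unfolding col_in_span3_def by blast
qed

lemma cols_indep3_distinct_cols:
  assumes "cols_indep3 n M a b c"
  shows "\<exists>i<n. M i a \<noteq> M i b"
proof (rule ccontr)
  assume "\<not> ?thesis"
  then have "\<forall>i<n. 1 * M i a + (- 1) * M i b + 0 * M i c = 0"
    by simp
  from cols_indep3D(1)[OF assms this] show False
    by simp
qed

lemma cols_basis_rescale:
  assumes indep: "cols_indep3 n M a b c" and span: "\<forall>v<n. col_in_span3 n M a b c v"
    and a: "\<forall>i<n. M i a = m1 * M i a'" and b: "\<forall>i<n. M i b = m2 * M i b'"
    and c: "\<forall>i<n. M i c = m3 * M i c'" and m: "m1 \<noteq> 0" "m2 \<noteq> 0" "m3 \<noteq> 0"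
  shows "cols_indep3 n M a' b' c'" "\<forall>v<n. col_in_span3 n M a' b' c' v"
proof -
  show "cols_indep3 n M a' b' c'"
    unfolding cols_indep3_def
  proof (intro allI impI)
    fix y1 y2 y3
    assume "\<forall>i<n. y1 * M i a' + y2 * M i b' + y3 * M i c' = 0"
    then have "\<forall>i<n. (y1 / m1) * M i a + (y2 / m2) * M i b + (y3 / m3) * M i c = 0"
      using a b c m by simp
    then have "y1 / m1 = 0" "y2 / m2 = 0" "y3 / m3 = 0"
      by (rule cols_indep3D[OF indep])+
    then show "y1 = 0 \<and> y2 = 0 \<and> y3 = 0"
      using m by simp
  qed
  show "\<forall>v<n. col_in_span3 n M a' b' c' v"
  proof (intro allI impI)
    fix v
    assume "v < n"
    then obtain x1 x2 x3 where "\<forall>i<n. M i v = x1 * M i a + x2 * M i b + x3 * M i c"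
      using span unfolding col_in_span3_def by blast
    then have "\<forall>i<n. M i v = (x1 * m1) * M i a' + (x2 * m2) * M i b' + (x3 * m3) * M i c'"
      using a b c by (simp add: algebra_simps)
    then show "col_in_span3 n M a' b' c' v"
      unfolding col_in_span3_def by blast
  qed
qed

context vec_space
begin

lemma rank_le_3_if_cols_in_span3:
  assumes "\<forall>v<n. col_in_span3 n M a b c v"
  shows "rank (mat n n (\<lambda>(i, j). M i j)) \<le> 3"
proof -
  have "\<forall>v. \<exists>x. v < n \<longrightarrow> (\<forall>i<n. M i v = fst x * M i a + fst (snd x) * M i b + snd (snd x) * M i c)"
    using assms unfolding col_in_span3_def by fastforce
  then obtain X where X: "\<forall>v<n. \<forall>i<n. M i v = fst (X v) * M i a + fst (snd (X v)) * M i b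
      + snd (snd (X v)) * M i c"
    by (metis choice)
  define X1 X2 X3 where "X1 v = fst (X v)" and "X2 v = fst (snd (X v))" and "X3 v = snd (snd (X v))" for v
  define A1 where "A1 = mat n n (\<lambda>(i, j). M i a * X1 j)"
  define A2 where "A2 = mat n n (\<lambda>(i, j). M i b * X2 j)"
  define A3 where "A3 = mat n n (\<lambda>(i, j). M i c * X3 j)"
  have carrier: "A1 \<in> carrier_mat n n" "A2 \<in> carrier_mat n n" "A3 \<in> carrier_mat n n"
    unfolding A1_def A2_def A3_def by auto
  have "mat n n (\<lambda>(i, j). M i j) = A1 + A2 + A3"
    by (rule eq_matI) (use X in \<open>auto simp: A1_def A2_def A3_def X1_def X2_def X3_def algebra_simps\<close>)
  then have "rank (mat n n (\<lambda>(i, j). M i j)) \<le> rank A1 + rank A2 + rank A3"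
    using rank_subadditive[of "A1 + A2" n A3] rank_subadditive[OF carrier(1,2)] carrier by auto
  moreover have "rank A1 \<le> 1" "rank A2 \<le> 1" "rank A3 \<le> 1"
    by (rule rank_le_1_product_entries[OF carrier(1)] rank_le_1_product_entries[OF carrier(2)]
        rank_le_1_product_entries[OF carrier(3)]; simp add: A1_def A2_def A3_def)+
  ultimately show ?thesis
    by linarith
qed

lemma lincomb_three_cols:
  assumes "A = mat n n (\<lambda>(i, j). M i j)" and "i < n" "a < n" "b < n" "c < n"
    and "col A a \<noteq> col A b" "col A a \<noteq> col A c" "col A b \<noteq> col A c"
  shows "lincomb f {col A a, col A b, col A c} $ i
    = f (col A a) * M i a + f (col A b) * M i b + f (col A c) * M i c"
proof -
  have "lincomb f {col A a, col A b, col A c} $ i = (\<Sum>x\<in>{col A a, col A b, col A c}. f x * x $ i)"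
    by (rule lincomb_index) (use assms in auto)
  then show ?thesis
    using assms by (simp add: algebra_simps)
qed

lemma lin_indpt_three_cols_iff:
  assumes A_def: "A = mat n n (\<lambda>(i, j). M i j)" and abc: "a < n" "b < n" "c < n"
    and neq: "col A a \<noteq> col A b" "col A a \<noteq> col A c" "col A b \<noteq> col A c"
  shows "lin_indpt {col A a, col A b, col A c} \<longleftrightarrow> cols_indep3 n M a b c"
proof
  have UC: "{col A a, col A b, col A c} \<subseteq> carrier_vec n"
    using abc unfolding A_def by auto
  have fin: "finite {col A a, col A b, col A c}"
    by simp
  note lc = lincomb_three_cols[OF A_def _ abc neq]
  {
    assume indep: "lin_indpt {col A a, col A b, col A c}"
    show "cols_indep3 n M a b c"
      unfolding cols_indep3_def
    proof (intro allI impI)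
      fix y1 y2 y3
      assume zero: "\<forall>i<n. y1 * M i a + y2 * M i b + y3 * M i c = 0"
      define f where "f u = (if u = col A a then y1 else if u = col A b then y2 else y3)" for u
      have f: "f (col A a) = y1" "f (col A b) = y2" "f (col A c) = y3"
        unfolding f_def using neq by auto
      have "lincomb f {col A a, col A b, col A c} = 0\<^sub>v n"
        by (rule eq_vecI) (use lc zero f lincomb_closed[OF UC] in auto)
      then have "\<forall>u\<in>{col A a, col A b, col A c}. f u = 0"
        using lin_dep_crit[OF fin subset_refl] indep by blast
      then show "y1 = 0 \<and> y2 = 0 \<and> y3 = 0"
        using f by auto
    qed
  }
  {
    assume indep: "cols_indep3 n M a b c"
    show "lin_indpt {col A a, col A b, col A c}"
    proof (rule finite_lin_indpt2[OF fin UC])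
      fix f
      assume "lincomb f {col A a, col A b, col A c} = 0\<^sub>v n"
      then have "\<forall>i<n. f (col A a) * M i a + f (col A b) * M i b + f (col A c) * M i c = 0"
        using lc by (metis index_zero_vec(1))
      then show "\<forall>v\<in>{col A a, col A b, col A c}. f v = 0"
        using cols_indep3D[OF indep] by blast
    qed
  }
qed

lemma rank_ge_3_if_cols_indep3:
  assumes abc: "a < n" "b < n" "c < n" and indep: "cols_indep3 n M a b c"
  shows "3 \<le> rank (mat n n (\<lambda>(i, j). M i j))"
proof -
  define A where "A = mat n n (\<lambda>(i, j). M i j)"
  have A: "A \<in> carrier_mat n n"
    unfolding A_def by simp
  have col_neq: "col A j \<noteq> col A k" if ex: "\<exists>i<n. M i j \<noteq> M i k" and jk: "j < n" "k < n" for j k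
  proof -
    obtain i where "i < n" "M i j \<noteq> M i k"
      using ex by blast
    then have "col A j $ i \<noteq> col A k $ i"
      using jk unfolding A_def by simp
    then show ?thesis
      by auto
  qed
  have "\<exists>i<n. M i a \<noteq> M i b" "\<exists>i<n. M i a \<noteq> M i c" "\<exists>i<n. M i b \<noteq> M i c"
    using cols_indep3_distinct_cols[OF indep] cols_indep3_distinct_cols[of n M a c b]
      cols_indep3_distinct_cols[of n M b c a] indep cols_indep3_swap23[of n M a b c]
      cols_indep3_swap12[of n M a b c] cols_indep3_swap23[of n M b a c] by blast+
  then have neq: "col A a \<noteq> col A b" "col A a \<noteq> col A c" "col A b \<noteq> col A c"
    using col_neq abc by blast+
  have "{col A a, col A b, col A c} \<subseteq> set (cols A)"
    unfolding cols_def using A abc by auto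
  moreover have "lin_indpt {col A a, col A b, col A c}"
    using lin_indpt_three_cols_iff[OF A_def abc neq] indep by blast
  moreover have "card {col A a, col A b, col A c} = 3"
    using neq by simp
  ultimately show ?thesis
    using rank_ge_card_indpt[OF A] unfolding A_def by metis
qed

lemma cols_basis_exists:
  assumes A: "A \<in> carrier_mat n nc"
  obtains U where "finite U" "U \<subseteq> set (cols A)" "lin_indpt U" "card U = rank A"
    "\<And>v. v \<in> set (cols A) \<Longrightarrow> v \<in> span U"
proof -
  have colsC: "set (cols A) \<subseteq> carrier_vec n"
    using A by (auto simp: cols_def)
  have "lin_indpt {}"
    by (rule finite_lin_indpt2) auto
  then obtain U where U: "finite U" "maximal U (\<lambda>T. T \<subseteq> set (cols A) \<and> lin_indpt T)"
    using maximal_exists_superset[of "set (cols A)" "\<lambda>T. T \<subseteq> set (cols A) \<and> lin_indpt T" "{}"]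
    by auto
  then have sub: "U \<subseteq> set (cols A)" and indep: "lin_indpt U"
    unfolding maximal_def by auto
  have span: "v \<in> span U" if v: "v \<in> set (cols A)" for v
  proof (cases "v \<in> U")
    case True
    then show ?thesis
      using in_own_span sub colsC by blast
  next
    case False
    then have "lin_dep (U \<union> {v})"
      using U(2) v sub unfolding maximal_def by blast
    then show ?thesis
      using lin_dep_iff_in_span[OF _ indep _ False] sub colsC v by blast
  qed
  show ?thesis
    by (rule that[OF U(1) sub indep _ span]) (simp add: rank_card_indpt[OF A U(2)])
qed

lemma rank_eq_3_cols_basis:
  assumes "rank (mat n n (\<lambda>(i, j). M i j)) = 3"
  obtains a b c where "a < n" "b < n" "c < n" "cols_indep3 n M a b c"
    "\<forall>v<n. col_in_span3 n M a b c v"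
proof -
  define A where "A = mat n n (\<lambda>(i, j). M i j)"
  have A: "A \<in> carrier_mat n n"
    unfolding A_def by simp
  obtain U where U: "finite U" "U \<subseteq> set (cols A)" "lin_indpt U" "card U = rank A"
    and span: "\<And>v. v \<in> set (cols A) \<Longrightarrow> v \<in> span U"
    using cols_basis_exists[OF A] by blast
  have col_index: "\<exists>j<n. u = col A j" if "u \<in> U" for u
    using that U(2) A unfolding cols_def by fastforce
  obtain u1 u2 u3 where "U = {u1, u2, u3}" "u1 \<noteq> u2" "u1 \<noteq> u3" "u2 \<noteq> u3"
    using U(4) assms unfolding A_def by (auto simp: card_3_iff)
  moreover obtain a b c where "a < n" "u1 = col A a" "b < n" "u2 = col A b" "c < n" "u3 = col A c"
    using col_index calculation(1) by (metis insertI1 insertI2)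
  ultimately have abc: "a < n" "b < n" "c < n" and U_eq: "U = {col A a, col A b, col A c}"
    and neq: "col A a \<noteq> col A b" "col A a \<noteq> col A c" "col A b \<noteq> col A c"
    by simp_all
  have "cols_indep3 n M a b c"
    using lin_indpt_three_cols_iff[OF A_def abc neq] U(3) unfolding U_eq by blast
  moreover have "col_in_span3 n M a b c v" if "v < n" for v
  proof -
    have "col A v \<in> span U"
      using span A that unfolding cols_def by auto
    moreover have "U \<subseteq> carrier_vec n"
      using U(2) A by (auto simp: cols_def)
    ultimately obtain f where f: "lincomb f U = col A v"
      using finite_in_span[OF U(1)] by blast
    have "M i v = f (col A a) * M i a + f (col A b) * M i b + f (col A c) * M i c" if "i < n" for i
      using lincomb_three_cols[OF A_def that abc neq, of f] f \<open>v < n\<close> that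
      unfolding U_eq A_def by simp
    then show ?thesis
      unfolding col_in_span3_def by blast
  qed
  ultimately show ?thesis
    using that abc by blast
qed

end

section \<open>Hollow Hermitian matrices with a triangle of independent columns\<close>

text \<open>For the block \<open>B = [[0, x, y], [cnj x, 0, z], [cnj y, cnj z, 0]]\<close> of a triangle,
  \<open>tri_det\<close> is \<open>det B\<close>, the \<open>tri_adj\<close>\<open>k\<close> are the entries of \<open>adj B * c\<close>, and \<open>tri_form\<close> is
  the sesquilinear form \<open>u\<^sup>* * adj B * c\<close>.\<close>

definition tri_det :: "complex \<Rightarrow> complex \<Rightarrow> complex \<Rightarrow> complex" where
  "tri_det x y z = x * z * cnj y + y * cnj x * cnj z"

definition tri_adj1 :: "complex \<Rightarrow> complex \<Rightarrow> complex \<Rightarrow> complex \<Rightarrow> complex \<Rightarrow> complex \<Rightarrow> complex" where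
  "tri_adj1 x y z c1 c2 c3 = - (z * cnj z * c1) + y * cnj z * c2 + x * z * c3"

definition tri_adj2 :: "complex \<Rightarrow> complex \<Rightarrow> complex \<Rightarrow> complex \<Rightarrow> complex \<Rightarrow> complex \<Rightarrow> complex" where
  "tri_adj2 x y z c1 c2 c3 = z * cnj y * c1 - y * cnj y * c2 + y * cnj x * c3"

definition tri_adj3 :: "complex \<Rightarrow> complex \<Rightarrow> complex \<Rightarrow> complex \<Rightarrow> complex \<Rightarrow> complex \<Rightarrow> complex" where
  "tri_adj3 x y z c1 c2 c3 = cnj x * cnj z * c1 + x * cnj y * c2 - x * cnj x * c3"

definition tri_form ::
  "complex \<Rightarrow> complex \<Rightarrow> complex \<Rightarrow> complex \<Rightarrow> complex \<Rightarrow> complex \<Rightarrow> complex \<Rightarrow> complex \<Rightarrow> complex \<Rightarrow> complex"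
where
  "tri_form x y z u1 u2 u3 c1 c2 c3 = cnj u1 * tri_adj1 x y z c1 c2 c3
     + cnj u2 * tri_adj2 x y z c1 c2 c3 + cnj u3 * tri_adj3 x y z c1 c2 c3"

lemmas tri_defs = tri_det_def tri_adj1_def tri_adj2_def tri_adj3_def tri_form_def

lemma tri_adj_solve:
  assumes "c1 = x * x2 + y * x3" "c2 = cnj x * x1 + z * x3" "c3 = cnj y * x1 + cnj z * x2"
  shows "tri_det x y z * x1 = tri_adj1 x y z c1 c2 c3"
    "tri_det x y z * x2 = tri_adj2 x y z c1 c2 c3"
    "tri_det x y z * x3 = tri_adj3 x y z c1 c2 c3"
  unfolding assms tri_defs by (simp_all add: algebra_simps)

lemma tri_mult_adj:
  "x * tri_adj2 x y z c1 c2 c3 + y * tri_adj3 x y z c1 c2 c3 = tri_det x y z * c1"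
  "cnj x * tri_adj1 x y z c1 c2 c3 + z * tri_adj3 x y z c1 c2 c3 = tri_det x y z * c2"
  "cnj y * tri_adj1 x y z c1 c2 c3 + cnj z * tri_adj2 x y z c1 c2 c3 = tri_det x y z * c3"
  unfolding tri_defs by (simp_all add: algebra_simps)

lemma tri_form_scale:
  "tri_form x y z u1 u2 u3 (m * c1) (m * c2) (m * c3) = m * tri_form x y z u1 u2 u3 c1 c2 c3"
  unfolding tri_defs by (simp add: algebra_simps)

lemma tri_form_zero: "tri_form x y z u1 u2 u3 0 0 0 = 0"
  unfolding tri_defs by simp

lemma hollow_hermitian_cols_indep3:
  assumes M: "hollow_hermitian M" and abc: "a < n" "b < n" "c < n"
    and det: "tri_det (M a b) (M a c) (M b c) \<noteq> 0"
  shows "cols_indep3 n M a b c"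
  unfolding cols_indep3_def
proof (intro allI impI)
  fix y1 y2 y3
  assume zero: "\<forall>i<n. y1 * M i a + y2 * M i b + y3 * M i c = 0"
  have herm: "M j i = cnj (M i j)" and diag: "M i i = 0" for i j
    using M unfolding hollow_hermitian_def by blast+
  have "M a b * y2 + M a c * y3 = 0" "cnj (M a b) * y1 + M b c * y3 = 0"
    "cnj (M a c) * y1 + cnj (M b c) * y2 = 0"
    using zero[rule_format, OF abc(1)] zero[rule_format, OF abc(2)] zero[rule_format, OF abc(3)]
      diag herm[of a b] herm[of a c] herm[of b c] by (simp_all add: algebra_simps)
  note solve = tri_adj_solve[OF this[symmetric]]
  show "y1 = 0 \<and> y2 = 0 \<and> y3 = 0"
    using solve det unfolding tri_defs by simp
qed

lemma hollow_hermitian_det_mult_entry: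
  assumes M: "hollow_hermitian M" and abc: "a < n" "b < n" "c < n"
    and span: "\<forall>v<n. col_in_span3 n M a b c v" and uv: "u < n" "v < n"
  shows "tri_det (M a b) (M a c) (M b c) * M u v =
    tri_form (M a b) (M a c) (M b c) (M a u) (M b u) (M c u) (M a v) (M b v) (M c v)"
proof -
  have herm: "M j i = cnj (M i j)" and diag: "M i i = 0" for i j
    using M unfolding hollow_hermitian_def by blast+
  obtain x1 x2 x3 where x: "\<forall>i<n. M i v = x1 * M i a + x2 * M i b + x3 * M i c"
    using span uv unfolding col_in_span3_def by blast
  have "M a v = M a b * x2 + M a c * x3" "M b v = cnj (M a b) * x1 + M b c * x3"
    "M c v = cnj (M a c) * x1 + cnj (M b c) * x2"
    using x abc diag herm[of a b] herm[of a c] herm[of b c] by (simp_all add: algebra_simps)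
  note solve = tri_adj_solve[OF this]
  have "tri_det (M a b) (M a c) (M b c) * M u v
      = (tri_det (M a b) (M a c) (M b c) * x1) * cnj (M a u)
        + (tri_det (M a b) (M a c) (M b c) * x2) * cnj (M b u)
        + (tri_det (M a b) (M a c) (M b c) * x3) * cnj (M c u)"
    using x uv herm[of _ u] by (simp add: algebra_simps)
  then show ?thesis
    unfolding solve tri_form_def by (simp add: algebra_simps)
qed

text \<open>If \<open>M a b = 0\<close>, the restrictions of all columns to the rows \<open>a\<close> and \<open>b\<close> are multiples
  of \<open>(M a c, M b c)\<close>, so these two rows, and hence the columns \<open>a\<close> and \<open>b\<close>, are dependent.\<close>

lemma hollow_hermitian_adj_relation:
  assumes M: "hollow_hermitian M" and r: "r \<in> {a, b, c, d}"
    and isotropic: "tri_form (M a b) (M a c) (M b c) (M a d) (M b d) (M c d) (M a d) (M b d) (M c d) = 0"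
  shows "tri_det (M a b) (M a c) (M b c) * M r d
    = tri_adj1 (M a b) (M a c) (M b c) (M a d) (M b d) (M c d) * M r a
      + tri_adj2 (M a b) (M a c) (M b c) (M a d) (M b d) (M c d) * M r b
      + tri_adj3 (M a b) (M a c) (M b c) (M a d) (M b d) (M c d) * M r c"
proof -
  have diag: "M i i = 0" for i
    using M unfolding hollow_hermitian_def by blast
  have herm: "M b a = cnj (M a b)" "M c a = cnj (M a c)" "M c b = cnj (M b c)"
    "M d a = cnj (M a d)" "M d b = cnj (M b d)" "M d c = cnj (M c d)"
    using M unfolding hollow_hermitian_def by blast+
  consider "r = a" | "r = b" | "r = c" | "r = d"
    using r by blast
  then show ?thesis
  proof cases
    case 1
    then show ?thesis
      using tri_mult_adj(1) diag by (simp add: algebra_simps)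
  next
    case 2
    then show ?thesis
      using tri_mult_adj(2) diag herm by (simp add: algebra_simps)
  next
    case 3
    then show ?thesis
      using tri_mult_adj(3) diag herm by (simp add: algebra_simps)
  next
    case 4
    then show ?thesis
      using isotropic diag herm unfolding tri_form_def by (simp add: algebra_simps)
  qed
qed

lemma hollow_hermitian_basis_entry_nonzero:
  assumes M: "hollow_hermitian M" and abc: "a < n" "b < n" "c < n"
    and indep: "cols_indep3 n M a b c" and span: "\<forall>v<n. col_in_span3 n M a b c v"
  shows "M a b \<noteq> 0"
proof
  assume ab: "M a b = 0"
  have herm: "M j i = cnj (M i j)" and diag: "M i i = 0" for i j
    using M unfolding hollow_hermitian_def by blast+
  have rows: "\<exists>x. M a v = x * M a c \<and> M b v = x * M b c" if v: "v < n" for v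
  proof -
    obtain x1 x2 x3 where x: "\<forall>i<n. M i v = x1 * M i a + x2 * M i b + x3 * M i c"
      using span v unfolding col_in_span3_def by blast
    have "M a v = x3 * M a c" "M b v = x3 * M b c"
      using x[rule_format, OF abc(1)] x[rule_format, OF abc(2)] ab diag[of a] diag[of b]
        herm[of a b] by simp_all
    then show ?thesis
      by blast
  qed
  have dep: "cnj (M b c) * M i a + (- cnj (M a c)) * M i b + 0 * M i c = 0" if i: "i < n" for i
  proof -
    obtain x where "M a i = x * M a c" "M b i = x * M b c"
      using rows[OF i] by blast
    then have "M b c * M a i - M a c * M b i = 0"
      by (simp add: algebra_simps)
    moreover have "cnj (M b c) * M i a + (- cnj (M a c)) * M i b + 0 * M i c
        = cnj (M b c * M a i - M a c * M b i)"
      using herm[of a i] herm[of b i] by simp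
    ultimately show ?thesis
      by simp
  qed
  have "- cnj (M a c) = 0"
    using cols_indep3D(2)[OF indep] dep by blast
  then have "M a c = 0"
    by simp
  have "\<forall>i<n. 1 * M i a + 0 * M i b + 0 * M i c = 0"
  proof (intro allI impI)
    fix i
    assume "i < n"
    then obtain x where "M a i = x * M a c"
      using rows by blast
    then show "1 * M i a + 0 * M i b + 0 * M i c = 0"
      using \<open>M a c = 0\<close> herm[of a i] by simp
  qed
  from cols_indep3D(1)[OF indep this] show False
    by simp
qed

lemma hollow_hermitian_basis_adjacent:
  assumes M: "hollow_hermitian M" and abc: "a < n" "b < n" "c < n"
    and indep: "cols_indep3 n M a b c" and span: "\<forall>v<n. col_in_span3 n M a b c v"
  shows "M a b \<noteq> 0" "M a c \<noteq> 0" "M b c \<noteq> 0"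
proof -
  show "M a b \<noteq> 0"
    by (rule hollow_hermitian_basis_entry_nonzero[OF assms])
  show "M a c \<noteq> 0"
    using hollow_hermitian_basis_entry_nonzero[OF M abc(1,3,2)] indep span
      cols_indep3_swap23 col_in_span3_swap23 by blast
  show "M b c \<noteq> 0"
    using hollow_hermitian_basis_entry_nonzero[OF M abc(2,3,1)] indep span
      cols_indep3_swap12[of n M a b c] cols_indep3_swap23[of n M b a c]
      col_in_span3_swap12[of n M a b c] col_in_span3_swap23[of n M b a c] by blast
qed

section \<open>Finite facts about the entries\<close>

definition t6_proportional :: "complex \<Rightarrow> complex \<Rightarrow> complex \<Rightarrow> complex \<Rightarrow> complex \<Rightarrow> complex \<Rightarrow> bool" where
  "t6_proportional c1 c2 c3 d1 d2 d3 \<longleftrightarrow> (\<exists>m\<in>T6. c1 = m * d1 \<and> c2 = m * d2 \<and> c3 = m * d3)"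

text \<open>The possible restrictions \<open>(c1, c2, c3)\<close> to a triangle \<open>x, y, z\<close> of the column of a
  further representative.\<close>

definition extra_column :: "complex \<Rightarrow> complex \<Rightarrow> complex \<Rightarrow> complex \<Rightarrow> complex \<Rightarrow> complex \<Rightarrow> bool" where
  "extra_column x y z c1 c2 c3 \<longleftrightarrow> \<not> (c1 = 0 \<and> c2 = 0 \<and> c3 = 0) \<and>
     tri_form x y z c1 c2 c3 c1 c2 c3 = 0 \<and>
     \<not> t6_proportional c1 c2 c3 0 (cnj x) (cnj y) \<and> \<not> t6_proportional c1 c2 c3 x 0 (cnj z) \<and>
     \<not> t6_proportional c1 c2 c3 y z 0"

text \<open>The weight condition of \<open>is_K4_two_pos_one_semineg\<close> for the labelling \<open>1, 2, 3, 4\<close>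
  of a \<open>K\<^sub>4\<close> with \<open>N\<^sub>1\<^sub>2 = x\<close>, \<open>N\<^sub>1\<^sub>3 = y\<close>, \<open>N\<^sub>2\<^sub>3 = z\<close> and \<open>N\<^sub>i\<^sub>4 = c\<^sub>i\<close>: the cycles
  \<open>1234\<close> and \<open>1243\<close> are positive and \<open>1324\<close> is semi-negative.\<close>

definition two_pos_one_semineg :: "complex \<Rightarrow> complex \<Rightarrow> complex \<Rightarrow> complex \<Rightarrow> complex \<Rightarrow> complex \<Rightarrow> bool" where
  "two_pos_one_semineg x y z c1 c2 c3 \<longleftrightarrow>
     positive_w (x * z * c3 * cnj c1) \<and> positive_w (x * c2 * cnj c3 * cnj y) \<and>
     semi_negative_w (y * cnj z * c2 * cnj c1)"

lemma tri_det_nonzero: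
  assumes "x \<in> {1, omega, cnj omega}" "y \<in> {1, omega, cnj omega}" "z \<in> {1, omega, cnj omega}"
  shows "tri_det x y z \<noteq> 0"
proof -
  have "\<forall>x\<in>{1, omega, cnj omega}. \<forall>y\<in>{1, omega, cnj omega}. \<forall>z\<in>{1, omega, cnj omega}.
      tri_det x y z \<noteq> 0"
    unfolding units_eq_of_eis ball_simps(9) tri_det_def by (simp only: of_eis_fold) code_simp
  from this[rule_format, OF assms] show ?thesis .
qed

lemma tri_form_self_eq_0_if_two_pos_one_semineg:
  assumes "x \<in> {1, omega, cnj omega}" "y \<in> {1, omega, cnj omega}" "z \<in> {1, omega, cnj omega}"
    "c1 \<in> {1, omega, cnj omega}" "c2 \<in> {1, omega, cnj omega}" "c3 \<in> {1, omega, cnj omega}"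
    and "two_pos_one_semineg x y z c1 c2 c3"
  shows "tri_form x y z c1 c2 c3 c1 c2 c3 = 0"
proof -
  have "\<forall>x\<in>{1, omega, cnj omega}. \<forall>y\<in>{1, omega, cnj omega}. \<forall>z\<in>{1, omega, cnj omega}.
      \<forall>c1\<in>{1, omega, cnj omega}. \<forall>c2\<in>{1, omega, cnj omega}. \<forall>c3\<in>{1, omega, cnj omega}.
      two_pos_one_semineg x y z c1 c2 c3 \<longrightarrow> tri_form x y z c1 c2 c3 c1 c2 c3 = 0"
    unfolding units_eq_of_eis ball_simps(9) two_pos_one_semineg_def positive_w_def
      semi_negative_w_def tri_defs
    by (simp only: of_eis_fold) code_simp
  from this[rule_format, OF assms] show ?thesis .
qed

lemma two_pos_one_semineg_nonzero:
  assumes "two_pos_one_semineg x y z c1 c2 c3"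
  shows "x \<noteq> 0" "y \<noteq> 0" "z \<noteq> 0" "c1 \<noteq> 0" "c2 \<noteq> 0" "c3 \<noteq> 0"
  using assms unfolding two_pos_one_semineg_def positive_w_def by auto

text \<open>The three disjuncts are the weight condition for the labellings \<open>1234\<close>, \<open>1324\<close> and
  \<open>1423\<close> of the triangle \<open>1, 2, 3\<close> and the further vertex \<open>4\<close>.\<close>

lemma extra_column_cases:
  assumes "x \<in> {1, omega, cnj omega}" "y \<in> {1, omega, cnj omega}" "z \<in> {1, omega, cnj omega}"
    "c1 \<in> {0, 1, omega, cnj omega}" "c2 \<in> {0, 1, omega, cnj omega}" "c3 \<in> {0, 1, omega, cnj omega}"
    and "extra_column x y z c1 c2 c3"
  shows "two_pos_one_semineg x y z c1 c2 c3 \<or> two_pos_one_semineg y x (cnj z) c1 c3 c2 \<or>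
    two_pos_one_semineg c1 x (cnj c2) y (cnj c3) z"
proof -
  have "\<forall>x\<in>{1, omega, cnj omega}. \<forall>y\<in>{1, omega, cnj omega}. \<forall>z\<in>{1, omega, cnj omega}.
      \<forall>c1\<in>{0, 1, omega, cnj omega}. \<forall>c2\<in>{0, 1, omega, cnj omega}. \<forall>c3\<in>{0, 1, omega, cnj omega}.
      extra_column x y z c1 c2 c3 \<longrightarrow>
      two_pos_one_semineg x y z c1 c2 c3 \<or> two_pos_one_semineg y x (cnj z) c1 c3 c2 \<or>
      two_pos_one_semineg c1 x (cnj c2) y (cnj c3) z"
    \<comment> \<open>the entry set first, since the unit set is a subterm of it\<close>
    unfolding entries_eq_of_eis unfolding units_eq_of_eis ball_simps(9) extra_column_def
      t6_proportional_def T6_eq_of_eis bex_simps(7) two_pos_one_semineg_def positive_w_def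
      semi_negative_w_def tri_defs
    by (simp only: of_eis_fold) code_simp
  from this[rule_format, OF assms] show ?thesis .
qed

definition eis_triples :: "(eisenstein \<times> eisenstein \<times> eisenstein) list" where
  "eis_triples = List.product eis_entries (List.product eis_entries eis_entries)"

text \<open>The extra columns are filtered once per triangle, which keeps the evaluation of
  the quadratically many pairs feasible.\<close>

lemma extra_columns_t6_proportional_eis:
  "\<forall>x\<in>set eis_units. \<forall>y\<in>set eis_units. \<forall>z\<in>set eis_units.
    (let C = filter (\<lambda>(c1, c2, c3). extra_column (of_eis x) (of_eis y) (of_eis z)
                        (of_eis c1) (of_eis c2) (of_eis c3)) eis_triples
     in \<forall>(c1, c2, c3)\<in>set C. \<forall>(d1, d2, d3)\<in>set C. \<forall>e\<in>set eis_entries.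
       tri_form (of_eis x) (of_eis y) (of_eis z) (of_eis c1) (of_eis c2) (of_eis c3)
         (of_eis d1) (of_eis d2) (of_eis d3) = tri_det (of_eis x) (of_eis y) (of_eis z) * of_eis e \<longrightarrow>
       t6_proportional (of_eis c1) (of_eis c2) (of_eis c3) (of_eis d1) (of_eis d2) (of_eis d3))"
  unfolding Let_def extra_column_def t6_proportional_def T6_eq_of_eis bex_simps(7) tri_defs
  by (simp only: of_eis_fold) code_simp

lemma extra_columns_t6_proportional:
  assumes "x \<in> {1, omega, cnj omega}" "y \<in> {1, omega, cnj omega}" "z \<in> {1, omega, cnj omega}"
    and "c1 \<in> {0, 1, omega, cnj omega}" "c2 \<in> {0, 1, omega, cnj omega}" "c3 \<in> {0, 1, omega, cnj omega}"
    and "d1 \<in> {0, 1, omega, cnj omega}" "d2 \<in> {0, 1, omega, cnj omega}" "d3 \<in> {0, 1, omega, cnj omega}"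
    and "e \<in> {0, 1, omega, cnj omega}"
    and "extra_column x y z c1 c2 c3" "extra_column x y z d1 d2 d3"
    and "tri_form x y z c1 c2 c3 d1 d2 d3 = tri_det x y z * e"
  shows "t6_proportional c1 c2 c3 d1 d2 d3"
proof -
  have "\<forall>x\<in>{1, omega, cnj omega}. \<forall>y\<in>{1, omega, cnj omega}. \<forall>z\<in>{1, omega, cnj omega}.
    \<forall>c1\<in>{0, 1, omega, cnj omega}. \<forall>c2\<in>{0, 1, omega, cnj omega}. \<forall>c3\<in>{0, 1, omega, cnj omega}.
    \<forall>d1\<in>{0, 1, omega, cnj omega}. \<forall>d2\<in>{0, 1, omega, cnj omega}. \<forall>d3\<in>{0, 1, omega, cnj omega}.
    \<forall>e\<in>{0, 1, omega, cnj omega}.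
      extra_column x y z c1 c2 c3 \<longrightarrow> extra_column x y z d1 d2 d3 \<longrightarrow>
      tri_form x y z c1 c2 c3 d1 d2 d3 = tri_det x y z * e \<longrightarrow> t6_proportional c1 c2 c3 d1 d2 d3"
    unfolding entries_eq_of_eis unfolding units_eq_of_eis ball_simps(9)
  proof (intro ballI impI)
    fix x y z c1 c2 c3 d1 d2 d3 e
    assume xyz: "x \<in> set eis_units" "y \<in> set eis_units" "z \<in> set eis_units"
      and c: "c1 \<in> set eis_entries" "c2 \<in> set eis_entries" "c3 \<in> set eis_entries"
      and d: "d1 \<in> set eis_entries" "d2 \<in> set eis_entries" "d3 \<in> set eis_entries"
      and e: "e \<in> set eis_entries"
    let ?C = "filter (\<lambda>(c1, c2, c3). extra_column (of_eis x) (of_eis y) (of_eis z)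
      (of_eis c1) (of_eis c2) (of_eis c3)) eis_triples"
    assume "extra_column (of_eis x) (of_eis y) (of_eis z) (of_eis c1) (of_eis c2) (of_eis c3)"
      and "extra_column (of_eis x) (of_eis y) (of_eis z) (of_eis d1) (of_eis d2) (of_eis d3)"
      and eq: "tri_form (of_eis x) (of_eis y) (of_eis z) (of_eis c1) (of_eis c2) (of_eis c3)
        (of_eis d1) (of_eis d2) (of_eis d3) = tri_det (of_eis x) (of_eis y) (of_eis z) * of_eis e"
    then have mem: "(c1, c2, c3) \<in> set ?C" "(d1, d2, d3) \<in> set ?C"
      using c d unfolding eis_triples_def by simp_all
    note C = extra_columns_t6_proportional_eis[unfolded Let_def, rule_format, OF xyz]
    from bspec[OF C[OF mem(1), unfolded prod.case] mem(2), unfolded prod.case] e eq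
    show "t6_proportional (of_eis c1) (of_eis c2) (of_eis c3) (of_eis d1) (of_eis d2) (of_eis d3)"
      by blast
  qed
  from this[rule_format, OF assms(1-13)] show ?thesis .
qed

section \<open>Twin classes\<close>

lemma twin_reduction_bounded: "twin_reduction n E D S \<Longrightarrow> s \<in> S \<Longrightarrow> s < n"
  unfolding twin_reduction_def by auto

lemma row_multiple_of_representative:
  assumes "mixed_graph n E D" and "twin_reduction n E D S" and "i < n"
  shows "\<exists>r\<in>S. \<exists>m. m \<noteq> 0 \<and> (\<forall>j<n. Nent E D i j = m * Nent E D r j)"
proof -
  obtain r where "r \<in> S" "twins n E D i r"
    using assms(2,3) unfolding twin_reduction_def by blast
  then show ?thesis
    using twins_row_multiple[OF assms(1)] by blast
qed

lemma column_multiple_of_representative: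
  assumes mg: "mixed_graph n E D" and "twin_reduction n E D S" and "v < n"
  shows "\<exists>s\<in>S. \<exists>m. m \<noteq> 0 \<and> (\<forall>i<n. Nent E D i v = m * Nent E D i s)"
proof -
  obtain s m where "s \<in> S" "m \<noteq> 0" and row: "\<forall>j<n. Nent E D v j = m * Nent E D s j"
    using row_multiple_of_representative[OF assms] by blast
  moreover have "Nent E D i v = cnj m * Nent E D i s" if "i < n" for i
    using row that Nent_swap[OF mg, of i v] Nent_swap[OF mg, of i s] by simp
  ultimately show ?thesis
    by (intro bexI[of _ s] exI[of _ "cnj m"]) auto
qed

lemma representatives_not_T6_multiples:
  assumes mg: "mixed_graph n E D" and tr: "twin_reduction n E D S"
    and tu: "t \<in> S" "u \<in> S" "t \<noteq> u" and m: "m \<in> T6"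
  shows "\<not> (\<forall>i<n. Nent E D i t = m * Nent E D i u)"
proof
  assume cols: "\<forall>i<n. Nent E D i t = m * Nent E D i u"
  have "Nent E D t j = cnj m * Nent E D u j" if "j < n" for j
    using cols that Nent_swap[OF mg, of t j] Nent_swap[OF mg, of u j] by simp
  then have "twins n E D t u"
    using twins_if_row_T6_multiple[OF mg twin_reduction_bounded[OF tr tu(1)]
        twin_reduction_bounded[OF tr tu(2)] T6_cnj[OF m]] by blast
  then show False
    using tr tu unfolding twin_reduction_def by blast
qed

lemma two_pos_one_semineg_Nent:
  assumes "mixed_graph n E D"
  shows "two_pos_one_semineg (Nent E D a b) (Nent E D a c) (Nent E D b c)
      (Nent E D a d) (Nent E D b d) (Nent E D c d) \<longleftrightarrow>
    positive_w (cycle4_weight E D a b c d) \<and> positive_w (cycle4_weight E D a b d c) \<and>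
    semi_negative_w (cycle4_weight E D a c b d)"
  unfolding two_pos_one_semineg_def cycle4_weight_def
  using Nent_swap[OF assms, of d a] Nent_swap[OF assms, of d c] Nent_swap[OF assms, of c a]
    Nent_swap[OF assms, of c b]
  by simp

lemma is_mixed_triangle_iff:
  assumes mg: "mixed_graph n E D"
  shows "is_mixed_triangle E S \<longleftrightarrow> (\<exists>a b c. S = {a, b, c} \<and> E a b \<and> E a c \<and> E b c)"
proof
  assume "is_mixed_triangle E S"
  then obtain a b c where "S = {a, b, c}" "a \<noteq> b" "a \<noteq> c" "b \<noteq> c" "\<forall>x\<in>S. \<forall>y\<in>S. x \<noteq> y \<longrightarrow> E x y"
    unfolding is_mixed_triangle_def by (auto simp: card_3_iff)
  then show "\<exists>a b c. S = {a, b, c} \<and> E a b \<and> E a c \<and> E b c"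
    by blast
next
  assume "\<exists>a b c. S = {a, b, c} \<and> E a b \<and> E a c \<and> E b c"
  then obtain a b c where S: "S = {a, b, c}" and edges: "E a b" "E a c" "E b c"
    by blast
  then have "a \<noteq> b" "a \<noteq> c" "b \<noteq> c"
    using mixed_graph_irrefl[OF mg] by blast+
  moreover have "E b a" "E c a" "E c b"
    using edges mixed_graph_sym[OF mg] by blast+
  ultimately show "is_mixed_triangle E S"
    unfolding is_mixed_triangle_def S using edges by auto
qed

lemma is_K4_two_pos_one_semineg_iff:
  assumes mg: "mixed_graph n E D"
  shows "is_K4_two_pos_one_semineg E D S \<longleftrightarrow>
    (\<exists>a b c d. S = {a, b, c, d} \<and> two_pos_one_semineg (Nent E D a b) (Nent E D a c) (Nent E D b c)
       (Nent E D a d) (Nent E D b d) (Nent E D c d))"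
proof
  assume "is_K4_two_pos_one_semineg E D S"
  then obtain a b c d where "S = {a, b, c, d}" "positive_w (cycle4_weight E D a b c d)"
    "positive_w (cycle4_weight E D a b d c)" "semi_negative_w (cycle4_weight E D a c b d)"
    unfolding is_K4_two_pos_one_semineg_def by blast
  then show "\<exists>a b c d. S = {a, b, c, d} \<and> two_pos_one_semineg (Nent E D a b) (Nent E D a c)
      (Nent E D b c) (Nent E D a d) (Nent E D b d) (Nent E D c d)"
    using two_pos_one_semineg_Nent[OF mg, of a b c d] by blast
next
  assume "\<exists>a b c d. S = {a, b, c, d} \<and> two_pos_one_semineg (Nent E D a b) (Nent E D a c)
      (Nent E D b c) (Nent E D a d) (Nent E D b d) (Nent E D c d)"
  then obtain a b c d where S: "S = {a, b, c, d}" and K4: "two_pos_one_semineg (Nent E D a b)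
      (Nent E D a c) (Nent E D b c) (Nent E D a d) (Nent E D b d) (Nent E D c d)"
    by blast
  have edges: "E a b" "E a c" "E b c" "E a d" "E b d" "E c d"
    using two_pos_one_semineg_nonzero[OF K4] by (simp_all add: Nent_eq_0_iff[OF mg])
  then have "a \<noteq> b" "a \<noteq> c" "a \<noteq> d" "b \<noteq> c" "b \<noteq> d" "c \<noteq> d"
    using mixed_graph_irrefl[OF mg] by blast+
  moreover have "E b a" "E c a" "E c b" "E d a" "E d b" "E d c"
    using edges mixed_graph_sym[OF mg] by blast+
  ultimately have "card S = 4" "\<forall>x\<in>S. \<forall>y\<in>S. x \<noteq> y \<longrightarrow> E x y"
    unfolding S using edges by auto
  moreover have "positive_w (cycle4_weight E D a b c d)" "positive_w (cycle4_weight E D a b d c)"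
    "semi_negative_w (cycle4_weight E D a c b d)"
    using K4 two_pos_one_semineg_Nent[OF mg, of a b c d] by blast+
  ultimately show "is_K4_two_pos_one_semineg E D S"
    unfolding is_K4_two_pos_one_semineg_def using S by blast
qed

section \<open>Rank three from a triangle or a \<open>K\<^sub>4\<close>\<close>

lemma rank_le_3_if_representatives_in_span:
  assumes mg: "mixed_graph n E D" and tr: "twin_reduction n E D S"
    and span: "\<forall>s\<in>S. col_in_span3 n (Nent E D) a b c s"
  shows "vec_space.rank n (Nmat n E D) \<le> 3"
proof -
  have "col_in_span3 n (Nent E D) a b c v" if v: "v < n" for v
  proof -
    obtain s m where "s \<in> S" "\<forall>i<n. Nent E D i v = m * Nent E D i s"
      using column_multiple_of_representative[OF mg tr v] by blast
    then show ?thesis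
      using span col_in_span3_scale by blast
  qed
  then show ?thesis
    unfolding Nmat_def by (intro vec_space.rank_le_3_if_cols_in_span3) blast
qed

lemma rank_ge_3_if_triangle:
  assumes mg: "mixed_graph n E D" and abc: "a < n" "b < n" "c < n"
    and edges: "E a b" "E a c" "E b c"
  shows "3 \<le> vec_space.rank n (Nmat n E D)"
proof -
  have "tri_det (Nent E D a b) (Nent E D a c) (Nent E D b c) \<noteq> 0"
    by (intro tri_det_nonzero Nent_in_units edges)
  then have "cols_indep3 n (Nent E D) a b c"
    using hollow_hermitian_cols_indep3[OF hollow_hermitian_Nent[OF mg] abc] by blast
  then show ?thesis
    unfolding Nmat_def by (rule vec_space.rank_ge_3_if_cols_indep3[OF abc])
qed

lemma rank_eq_3_if_triangle:
  assumes mg: "mixed_graph n E D" and tr: "twin_reduction n E D S" and S: "S = {a, b, c}"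
    and edges: "E a b" "E a c" "E b c"
  shows "vec_space.rank n (Nmat n E D) = 3"
proof -
  have "a < n" "b < n" "c < n"
    using twin_reduction_bounded[OF tr] S by blast+
  moreover have "\<forall>s\<in>S. col_in_span3 n (Nent E D) a b c s"
    using S col_in_span3_self by blast
  ultimately show ?thesis
    using rank_le_3_if_representatives_in_span[OF mg tr] rank_ge_3_if_triangle[OF mg _ _ _ edges]
    by (meson le_antisym)
qed

lemma col_in_span3_if_on_representative_rows:
  assumes mg: "mixed_graph n E D" and tr: "twin_reduction n E D S" and "a < n" "b < n" "c < n" "d < n"
    and rel: "\<forall>r\<in>S. Nent E D r d = x1 * Nent E D r a + x2 * Nent E D r b + x3 * Nent E D r c"
  shows "col_in_span3 n (Nent E D) a b c d"
proof -
  have "Nent E D i d = x1 * Nent E D i a + x2 * Nent E D i b + x3 * Nent E D i c" if i: "i < n" for i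
  proof -
    obtain r m where "r \<in> S" and row: "\<forall>j<n. Nent E D i j = m * Nent E D r j"
      using row_multiple_of_representative[OF mg tr i] by blast
    then show ?thesis
      using rel assms(3-6) by (simp add: algebra_simps)
  qed
  then show ?thesis
    unfolding col_in_span3_def by blast
qed

lemma rank_eq_3_if_K4:
  assumes mg: "mixed_graph n E D" and tr: "twin_reduction n E D S" and S: "S = {a, b, c, d}"
    and weights: "two_pos_one_semineg (Nent E D a b) (Nent E D a c) (Nent E D b c)
      (Nent E D a d) (Nent E D b d) (Nent E D c d)"
  shows "vec_space.rank n (Nmat n E D) = 3"
proof -
  let ?N = "Nent E D"
  let ?det = "tri_det (?N a b) (?N a c) (?N b c)"
  let ?adj1 = "tri_adj1 (?N a b) (?N a c) (?N b c) (?N a d) (?N b d) (?N c d)"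
  let ?adj2 = "tri_adj2 (?N a b) (?N a c) (?N b c) (?N a d) (?N b d) (?N c d)"
  let ?adj3 = "tri_adj3 (?N a b) (?N a c) (?N b c) (?N a d) (?N b d) (?N c d)"
  have abcd: "a < n" "b < n" "c < n" "d < n"
    using twin_reduction_bounded[OF tr] S by blast+
  have edges: "E a b" "E a c" "E b c" "E a d" "E b d" "E c d"
    using two_pos_one_semineg_nonzero[OF weights] by (simp_all add: Nent_eq_0_iff[OF mg])
  have det: "?det \<noteq> 0"
    by (intro tri_det_nonzero Nent_in_units edges)
  have "tri_form (?N a b) (?N a c) (?N b c) (?N a d) (?N b d) (?N c d)
      (?N a d) (?N b d) (?N c d) = 0"
    by (intro tri_form_self_eq_0_if_two_pos_one_semineg Nent_in_units edges weights)
  then have "?det * ?N r d = ?adj1 * ?N r a + ?adj2 * ?N r b + ?adj3 * ?N r c" if "r \<in> S" for r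
    using hollow_hermitian_adj_relation[OF hollow_hermitian_Nent[OF mg]] S that by blast
  then have "\<forall>r\<in>S. ?N r d = (?adj1 / ?det) * ?N r a + (?adj2 / ?det) * ?N r b + (?adj3 / ?det) * ?N r c"
    using det by (simp add: field_simps)
  then have "col_in_span3 n ?N a b c d"
    by (rule col_in_span3_if_on_representative_rows[OF mg tr abcd])
  then have "\<forall>s\<in>S. col_in_span3 n ?N a b c s"
    using S col_in_span3_self by blast
  then show ?thesis
    using rank_le_3_if_representatives_in_span[OF mg tr] rank_ge_3_if_triangle[OF mg abcd(1-3) edges(1-3)]
    by (meson le_antisym)
qed

section \<open>Rank three forces a triangle or a \<open>K\<^sub>4\<close>\<close>

locale representative_triangle =
  fixes n :: nat and E D :: "nat \<Rightarrow> nat \<Rightarrow> bool" and S :: "nat set" and s1 s2 s3 :: nat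
  assumes mixed: "mixed_graph n E D" and reduction: "twin_reduction n E D S"
    and in_S: "s1 \<in> S" "s2 \<in> S" "s3 \<in> S"
    and edges: "E s1 s2" "E s1 s3" "E s2 s3"
    and span: "\<forall>v<n. col_in_span3 n (Nent E D) s1 s2 s3 v"
begin

abbreviation N :: "nat \<Rightarrow> nat \<Rightarrow> complex" where
  "N \<equiv> Nent E D"

abbreviation det_B :: complex where
  "det_B \<equiv> tri_det (N s1 s2) (N s1 s3) (N s2 s3)"

lemma triangle_bounded: "s1 < n" "s2 < n" "s3 < n"
  using twin_reduction_bounded[OF reduction] in_S by blast+

lemma det_nonzero: "det_B \<noteq> 0"
  by (intro tri_det_nonzero Nent_in_units edges)

lemma det_mult_entry:
  assumes "u < n" "v < n"
  shows "det_B * N u v =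
    tri_form (N s1 s2) (N s1 s3) (N s2 s3) (N s1 u) (N s2 u) (N s3 u) (N s1 v) (N s2 v) (N s3 v)"
  using hollow_hermitian_det_mult_entry[OF hollow_hermitian_Nent[OF mixed] triangle_bounded span assms] .

lemma column_multiple_if_restriction_multiple:
  assumes uv: "u < n" "v < n" and "N s1 u = m * N s1 v" "N s2 u = m * N s2 v" "N s3 u = m * N s3 v"
  shows "\<forall>i<n. N i u = m * N i v"
proof (intro allI impI)
  fix i
  assume "i < n"
  have "det_B * N i u = tri_form (N s1 s2) (N s1 s3) (N s2 s3) (N s1 i) (N s2 i) (N s3 i)
      (m * N s1 v) (m * N s2 v) (m * N s3 v)"
    using det_mult_entry[OF \<open>i < n\<close> uv(1)] assms(3-5) by simp
  also have "\<dots> = m * (det_B * N i v)"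
    unfolding tri_form_scale det_mult_entry[OF \<open>i < n\<close> uv(2)] ..
  finally show "N i u = m * N i v"
    using det_nonzero by simp
qed

lemma restrictions_not_t6_proportional:
  assumes tu: "t \<in> S" "u \<in> S" "t \<noteq> u"
  shows "\<not> t6_proportional (N s1 t) (N s2 t) (N s3 t) (N s1 u) (N s2 u) (N s3 u)"
proof
  assume "t6_proportional (N s1 t) (N s2 t) (N s3 t) (N s1 u) (N s2 u) (N s3 u)"
  then obtain m where "m \<in> T6" "N s1 t = m * N s1 u" "N s2 t = m * N s2 u" "N s3 t = m * N s3 u"
    unfolding t6_proportional_def by blast
  moreover have "t < n" "u < n"
    using twin_reduction_bounded[OF reduction] tu by blast+
  ultimately show False
    using column_multiple_if_restriction_multiple representatives_not_T6_multiples[OF mixed reduction tu]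
    by blast
qed

lemma extra_column_of_representative:
  assumes conn: "connected_graph n E" and t: "t \<in> S" "t \<notin> {s1, s2, s3}"
  shows "extra_column (N s1 s2) (N s1 s3) (N s2 s3) (N s1 t) (N s2 t) (N s3 t)"
proof -
  have "t < n"
    using twin_reduction_bounded[OF reduction t(1)] .
  have nonzero: "\<not> (N s1 t = 0 \<and> N s2 t = 0 \<and> N s3 t = 0)"
  proof
    assume zero: "N s1 t = 0 \<and> N s2 t = 0 \<and> N s3 t = 0"
    have "E\<^sup>*\<^sup>* t s1"
      using conn \<open>t < n\<close> triangle_bounded unfolding connected_graph_def by blast
    then obtain u where "E t u"
      using t(2) by (cases rule: converse_rtranclpE) auto
    then have "u < n" "N u t \<noteq> 0"
      using mixed_graph_bounded[OF mixed] mixed_graph_sym[OF mixed] Nent_eq_0_iff[OF mixed] by blast+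
    moreover have "det_B * N u t = 0"
      using det_mult_entry[OF \<open>u < n\<close> \<open>t < n\<close>] zero tri_form_zero by simp
    ultimately show False
      using det_nonzero by simp
  qed
  have "N s1 s1 = 0" "N s2 s2 = 0" "N s3 s3 = 0" "N t t = 0"
    using Nent_diag[OF mixed] by blast+
  moreover have "N s2 s1 = cnj (N s1 s2)" "N s3 s1 = cnj (N s1 s3)" "N s3 s2 = cnj (N s2 s3)"
    using Nent_swap[OF mixed] by blast+
  moreover have "s1 \<noteq> t" "s2 \<noteq> t" "s3 \<noteq> t"
    using t(2) by blast+
  ultimately show ?thesis
    unfolding extra_column_def
    using nonzero det_mult_entry[OF \<open>t < n\<close> \<open>t < n\<close>] restrictions_not_t6_proportional[OF t(1) in_S(1)]
      restrictions_not_t6_proportional[OF t(1) in_S(2)] restrictions_not_t6_proportional[OF t(1) in_S(3)]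
    by simp
qed

lemma extra_representative_unique:
  assumes conn: "connected_graph n E" and t: "t \<in> S" "t \<notin> {s1, s2, s3}"
    and t': "t' \<in> S" "t' \<notin> {s1, s2, s3}"
  shows "t = t'"
proof (rule ccontr)
  assume "t \<noteq> t'"
  have "t < n" "t' < n"
    using twin_reduction_bounded[OF reduction] t t' by blast+
  have "t6_proportional (N s1 t) (N s2 t) (N s3 t) (N s1 t') (N s2 t') (N s3 t')"
    by (rule extra_columns_t6_proportional[OF Nent_in_units Nent_in_units Nent_in_units
          Nent_in_entries Nent_in_entries Nent_in_entries Nent_in_entries Nent_in_entries
          Nent_in_entries Nent_in_entries[of E D t t'] extra_column_of_representative[OF conn t]
          extra_column_of_representative[OF conn t'] det_mult_entry[OF \<open>t < n\<close> \<open>t' < n\<close>, symmetric]])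
      (use edges in blast)+
  then show False
    using restrictions_not_t6_proportional[OF t(1) t'(1) \<open>t \<noteq> t'\<close>] by blast
qed

lemma triangle_or_K4:
  assumes conn: "connected_graph n E"
  shows "is_mixed_triangle E S \<or> is_K4_two_pos_one_semineg E D S"
proof (cases "S \<subseteq> {s1, s2, s3}")
  case True
  then have "S = {s1, s2, s3}"
    using in_S by blast
  then show ?thesis
    using is_mixed_triangle_iff[OF mixed] edges by blast
next
  case False
  then obtain t where t: "t \<in> S" "t \<notin> {s1, s2, s3}"
    by blast
  then have S: "S = {s1, s2, s3, t}"
    using extra_representative_unique[OF conn t] in_S by blast
  have "two_pos_one_semineg (N s1 s2) (N s1 s3) (N s2 s3) (N s1 t) (N s2 t) (N s3 t) \<or>
      two_pos_one_semineg (N s1 s3) (N s1 s2) (cnj (N s2 s3)) (N s1 t) (N s3 t) (N s2 t) \<or>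
      two_pos_one_semineg (N s1 t) (N s1 s2) (cnj (N s2 t)) (N s1 s3) (cnj (N s3 t)) (N s2 s3)"
    by (rule extra_column_cases[OF Nent_in_units Nent_in_units Nent_in_units
          Nent_in_entries Nent_in_entries Nent_in_entries extra_column_of_representative[OF conn t]])
      (use edges in blast)+
  then have "\<exists>a b c d. S = {a, b, c, d} \<and> two_pos_one_semineg (N a b) (N a c) (N b c)
      (N a d) (N b d) (N c d)"
  proof (elim disjE)
    assume "two_pos_one_semineg (N s1 s2) (N s1 s3) (N s2 s3) (N s1 t) (N s2 t) (N s3 t)"
    with S show ?thesis
      by blast
  next
    assume "two_pos_one_semineg (N s1 s3) (N s1 s2) (cnj (N s2 s3)) (N s1 t) (N s3 t) (N s2 t)"
    then have "S = {s1, s3, s2, t} \<and>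
        two_pos_one_semineg (N s1 s3) (N s1 s2) (N s3 s2) (N s1 t) (N s3 t) (N s2 t)"
      using S Nent_swap[OF mixed, of s3 s2] by (simp add: insert_commute)
    then show ?thesis
      by blast
  next
    assume "two_pos_one_semineg (N s1 t) (N s1 s2) (cnj (N s2 t)) (N s1 s3) (cnj (N s3 t)) (N s2 s3)"
    then have "S = {s1, t, s2, s3} \<and>
        two_pos_one_semineg (N s1 t) (N s1 s2) (N t s2) (N s1 s3) (N t s3) (N s2 s3)"
      using S Nent_swap[OF mixed, of t s2] Nent_swap[OF mixed, of t s3] by (simp add: insert_commute)
    then show ?thesis
      by blast
  qed
  then show ?thesis
    using is_K4_two_pos_one_semineg_iff[OF mixed] by blast
qed

end

lemma rank_eq_3_imp_triangle_or_K4: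
  assumes mg: "mixed_graph n E D" and conn: "connected_graph n E" and tr: "twin_reduction n E D S"
    and rank: "vec_space.rank n (Nmat n E D) = 3"
  shows "is_mixed_triangle E S \<or> is_K4_two_pos_one_semineg E D S"
proof -
  obtain j1 j2 j3 where j: "j1 < n" "j2 < n" "j3 < n" and indep: "cols_indep3 n (Nent E D) j1 j2 j3"
    and span: "\<forall>v<n. col_in_span3 n (Nent E D) j1 j2 j3 v"
    by (rule vec_space.rank_eq_3_cols_basis[OF rank[unfolded Nmat_def]])
  obtain s1 m1 where s1: "s1 \<in> S" "m1 \<noteq> 0" "\<forall>i<n. Nent E D i j1 = m1 * Nent E D i s1"
    using column_multiple_of_representative[OF mg tr j(1)] by blast
  obtain s2 m2 where s2: "s2 \<in> S" "m2 \<noteq> 0" "\<forall>i<n. Nent E D i j2 = m2 * Nent E D i s2"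
    using column_multiple_of_representative[OF mg tr j(2)] by blast
  obtain s3 m3 where s3: "s3 \<in> S" "m3 \<noteq> 0" "\<forall>i<n. Nent E D i j3 = m3 * Nent E D i s3"
    using column_multiple_of_representative[OF mg tr j(3)] by blast
  note basis = cols_basis_rescale[OF indep span s1(3) s2(3) s3(3) s1(2) s2(2) s3(2)]
  have "s1 < n" "s2 < n" "s3 < n"
    using twin_reduction_bounded[OF tr] s1(1) s2(1) s3(1) by blast+
  note adjacent = hollow_hermitian_basis_adjacent[OF hollow_hermitian_Nent[OF mg] this basis]
  have "E s1 s2" "E s1 s3" "E s2 s3"
    using adjacent by (simp_all add: Nent_eq_0_iff[OF mg])
  then have "representative_triangle n E D S s1 s2 s3"
    using mg tr s1(1) s2(1) s3(1) basis(2) by (simp add: representative_triangle_def)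
  then show ?thesis
    by (rule representative_triangle.triangle_or_K4[OF _ conn])
qed

theorem theorem5p14:
  fixes n :: nat and E D :: "nat \<Rightarrow> nat \<Rightarrow> bool" and S :: "nat set"
  assumes "mixed_graph n E D"
    and "connected_graph n E"
    and "twin_reduction n E D S"
  shows "vec_space.rank n (Nmat n E D) = 3 \<longleftrightarrow>
           (is_mixed_triangle E S \<or> is_K4_two_pos_one_semineg E D S)"
proof
  assume "vec_space.rank n (Nmat n E D) = 3"
  then show "is_mixed_triangle E S \<or> is_K4_two_pos_one_semineg E D S"
    by (rule rank_eq_3_imp_triangle_or_K4[OF assms])
next
  assume "is_mixed_triangle E S \<or> is_K4_two_pos_one_semineg E D S"
  then show "vec_space.rank n (Nmat n E D) = 3"
  proof
    assume "is_mixed_triangle E S"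
    then obtain a b c where "S = {a, b, c}" "E a b" "E a c" "E b c"
      unfolding is_mixed_triangle_iff[OF assms(1)] by blast
    then show ?thesis
      by (rule rank_eq_3_if_triangle[OF assms(1,3)])
  next
    assume "is_K4_two_pos_one_semineg E D S"
    then obtain a b c d where "S = {a, b, c, d}" and "two_pos_one_semineg (Nent E D a b)
        (Nent E D a c) (Nent E D b c) (Nent E D a d) (Nent E D b d) (Nent E D c d)"
      unfolding is_K4_two_pos_one_semineg_iff[OF assms(1)] by blast
    then show ?thesis
      by (rule rank_eq_3_if_K4[OF assms(1,3)])
  qed
qed

end
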